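(* In the setting described in the context, let $0<h<h_\circ$ and let $\alpha$ be a multi-index with $|\alpha|\le 2k+5$. Then there is a constant $C>1$, independent of $h$ and $v$, such that $|\partial_x^\alpha\Phi_v^h(x)|\le C$ for all $x\in B_{R_\circ}$.
   Context: $B_r$ is the open ball of radius $r$ centered at $0$ in $\mathbb R^d$, $2\le d\le4$. Let $\phi:\mathbb R^d\to\mathbb R$ coincide on $[-1,1]^d$ with an analytic convex function of finite type defined on $[-2,2]^d$ and vanish outside $[-1,1]^d$; finite type means there are an integer $k\ge2$ and $m,M>0$ with $|\partial^\alpha\phi(x)|\le M$ for $|\alpha|\le 2k+5$ and $\sum_{j=2}^k\frac1{j!}|(u\cdot\nabla)^j\phi(x)|\ge m$ for all $x\in[-1,1]^d$ and unit vectors $u$. For $v\in\mathbb R^d$ with $-v\in\nabla\phi(B_{1/4})$, let $\omega_v\in B_{1/4}$ be the unique point with $\nabla\phi(\omega_v)=-v$ and $\Phi_v(x)=\phi(x+\omega_v)+v\cdot x-\phi(\omega_v)$. There is $c_\phi>0$ with $(c_\phi|x|)^k\le\Phi_v(x)$ on $B_{1/2}$ for all such $v$; fix $0<h_\circ\le(c_\phi/4)^k$. For $0<h<h_\circ$ let $\mathcal B_v^h=\{x\in B_{1/2}:\Phi_v(x)<h/2\}$, let $T_v^h$ be an invertible affine map of $\mathbb R^d$ with $B_1\subset(T_v^h)^{-1}\mathcal B_v^h\subset B_d$, and set $\Phi_v^h(x)=h^{-1}\Phi_v(T_v^hx)$. Standing assumption: $h_\circ$ is small enough (arranged in the paper by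 localizing the cutoff to a small ball) that every $\Phi_v^h$ is defined, convex and of finite type on a ball $B_{R_\circ}$ with $R_\circ\ge100d$. *)

theory Defs
  imports "HOL-Analysis.Analysis"
begin

definition pderiv_coord :: "'n::finite \<Rightarrow> (real^'n \<Rightarrow> real) \<Rightarrow> real^'n \<Rightarrow> real" where
  "pderiv_coord i f x = deriv (\<lambda>t. f (x + t *\<^sub>R axis i 1)) 0"

text \<open>Iterated partial derivative along a list of coordinates; a multi-index alpha
  corresponds to any list in which each coordinate i occurs alpha(i) times, and
  |alpha| is the length of the list.\<close>
fun pderivs :: "'n::finite list \<Rightarrow> (real^'n \<Rightarrow> real) \<Rightarrow> real^'n \<Rightarrow> real" where
  "pderivs [] f = f"
| "pderivs (i # is) f = pderiv_coord i (pderivs is f)"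

text \<open>j-th directional derivative (u . grad)^j f at x.\<close>
definition dir_deriv :: "nat \<Rightarrow> real^'n \<Rightarrow> (real^'n \<Rightarrow> real) \<Rightarrow> real^'n \<Rightarrow> real" where
  "dir_deriv j u f x = (deriv ^^ j) (\<lambda>t. f (x + t *\<^sub>R u)) 0"

text \<open>Real analyticity at a point: locally equal to an (unconditionally, hence absolutely)
  convergent multivariate power series.\<close>
definition real_analytic_at :: "(real^'n::finite \<Rightarrow> real) \<Rightarrow> real^'n \<Rightarrow> bool" where
  "real_analytic_at f x0 \<longleftrightarrow> (\<exists>r>0. \<exists>c :: ('n \<Rightarrow> nat) \<Rightarrow> real.
     \<forall>y. norm (y - x0) < r \<longrightarrow>
       ((\<lambda>a. c a * (\<Prod>i\<in>UNIV. (y $ i - x0 $ i) ^ a i)) has_sum f y) UNIV)"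

definition cube :: "real \<Rightarrow> (real^'n::finite) set" where
  "cube s = {x. \<forall>i. \<bar>x $ i\<bar> \<le> s}"

definition open_cube :: "real \<Rightarrow> (real^'n::finite) set" where
  "open_cube s = {x. \<forall>i. \<bar>x $ i\<bar> < s}"

definition Phi :: "(real^'n::finite \<Rightarrow> real) \<Rightarrow> real^'n \<Rightarrow> real^'n \<Rightarrow> real^'n \<Rightarrow> real" where
  "Phi \<phi> v \<omega> x = \<phi> (x + \<omega>) + v \<bullet> x - \<phi> \<omega>"

definition admissible :: "(real^'n::finite \<Rightarrow> real) \<Rightarrow> real^'n \<Rightarrow> real^'n \<Rightarrow> bool" where
  "admissible \<phi> v \<omega> \<longleftrightarrow> \<omega> \<in> ball 0 (1/4) \<and> (\<phi> has_derivative (\<lambda>y. (- v) \<bullet> y)) (at \<omega>)"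

definition sect :: "(real^'n::finite \<Rightarrow> real) \<Rightarrow> real^'n \<Rightarrow> real^'n \<Rightarrow> real \<Rightarrow> (real^'n) set" where
  "sect \<phi> v \<omega> h = {x \<in> ball 0 (1/2). Phi \<phi> v \<omega> x < h / 2}"

definition normalizing :: "(real^'n::finite \<Rightarrow> real) \<Rightarrow> real^'n \<Rightarrow> real^'n \<Rightarrow> real
     \<Rightarrow> real^'n^'n \<Rightarrow> real^'n \<Rightarrow> bool" where
  "normalizing \<phi> v \<omega> h A b \<longleftrightarrow> invertible A \<and>
     ball 0 1 \<subseteq> {x. A *v x + b \<in> sect \<phi> v \<omega> h} \<and>
     {x. A *v x + b \<in> sect \<phi> v \<omega> h} \<subseteq> ball 0 (real CARD('n))"

definition Phi_h :: "(real^'n::finite \<Rightarrow> real) \<Rightarrow> real^'n \<Rightarrow> real^'n \<Rightarrow> real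
     \<Rightarrow> real^'n^'n \<Rightarrow> real^'n \<Rightarrow> real^'n \<Rightarrow> real" where
  "Phi_h \<phi> v \<omega> h A b x = Phi \<phi> v \<omega> (A *v x + b) / h"

end

theory Submission
  imports Defs
begin

text \<open>
  Where \<open>\<phi>\<close> agrees with the analytic \<open>\<psi>\<close>, a derivative of order j of \<open>\<Phi>\<^sub>v\<^sup>h\<close> is
  \<open>h\<^sup>-\<^sup>1\<close> times a j-th directional derivative of \<open>\<psi>\<close> along the columns of the
  normalizing map, plus the contribution of the linear part \<open>v\<cdot>x\<close> when \<open>j \<le> 1\<close>.
  The growth bound \<open>(c\<^sub>\<phi>|x|)\<^sup>k \<le> \<Phi>\<^sub>v(x)\<close> puts the section \<open>\<B>\<^sub>v\<^sup>h\<close> inside a ball of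
  radius \<open>h\<^sup>1\<^sup>/\<^sup>k/c\<^sub>\<phi>\<close>, so the columns have length \<open>O(h\<^sup>1\<^sup>/\<^sup>k)\<close> and all derivatives of
  order at least k are bounded independently of h and v.

  The derivatives of order less than k are then recovered by interpolation from
  \<open>|\<Phi>\<^sub>v\<^sup>h| \<le> 1\<close> on the unit ball: along a coordinate axis, a derivative of order j is
  the linear Taylor coefficient of one of order j - 1, the Taylor polynomial of degree
  k - 1 is bounded on a short interval, and the coefficients of a polynomial of bounded
  degree are bounded by its values there. This bounds the low derivatives near 0; Taylor
  expansion along one coordinate axis after the other carries the bound to all of \<open>B\<^sub>R\<close>.
\<close>

section \<open>Termwise differentiation of unordered sums\<close>

lemma abs_diff_le_deriv_bound:
  fixes f f' :: "real \<Rightarrow> real"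
  assumes "\<And>t. \<bar>t\<bar> < \<tau> \<Longrightarrow> (f has_real_derivative f' t) (at t)"
    and "\<And>t. \<bar>t\<bar> < \<tau> \<Longrightarrow> \<bar>f' t\<bar> \<le> B"
    and "\<bar>x\<bar> < \<tau>"
  shows "\<bar>f x - f 0\<bar> \<le> B * \<bar>x\<bar>"
proof -
  have "norm (f x - f 0) \<le> B * norm (x - 0)"
  proof (rule field_differentiable_bound[where S="{-\<bar>x\<bar>..\<bar>x\<bar>}"])
    fix z assume "z \<in> {-\<bar>x\<bar>..\<bar>x\<bar>}"
    then have "\<bar>z\<bar> < \<tau>" using assms(3) by auto
    then show "(f has_field_derivative f' z) (at z within {-\<bar>x\<bar>..\<bar>x\<bar>})" "norm (f' z) \<le> B"
      using assms(1,2) by (auto intro: has_field_derivative_at_within)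
  qed auto
  then show ?thesis by simp
qed

lemma summable_on_comparison_abs:
  fixes f g :: "'a \<Rightarrow> real"
  assumes "g summable_on A" "\<And>x. x \<in> A \<Longrightarrow> \<bar>f x\<bar> \<le> g x"
  shows "f summable_on A"
proof -
  have "(\<lambda>x. \<bar>f x\<bar>) summable_on A"
    using assms by (intro summable_on_comparison_test[OF assms(1)]) auto
  then show ?thesis
    using summable_on_iff_abs_summable_on_real[of f A] by simp
qed

lemma summable_on_sum:
  fixes f :: "'i \<Rightarrow> 'a \<Rightarrow> 'b::topological_comm_monoid_add"
  assumes "finite I" "\<And>i. i \<in> I \<Longrightarrow> f i summable_on A"
  shows "(\<lambda>x. \<Sum>i\<in>I. f i x) summable_on A"
  using assms by (induction I rule: finite_induct) (auto intro: summable_on_add)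

lemma infsum_sum:
  fixes f :: "'i \<Rightarrow> 'a \<Rightarrow> 'b::{topological_comm_monoid_add,t2_space}"
  assumes "finite I" "\<And>i. i \<in> I \<Longrightarrow> f i summable_on A"
  shows "infsum (\<lambda>x. \<Sum>i\<in>I. f i x) A = (\<Sum>i\<in>I. infsum (f i) A)"
  using assms
proof (induction I rule: finite_induct)
  case (insert j I)
  then show ?case
    by (simp add: infsum_add summable_on_sum)
qed simp

lemma sums_infsum_reindex:
  fixes f :: "'a \<Rightarrow> 'b::{topological_comm_monoid_add,t2_space}"
  assumes "bij_betw g (UNIV :: nat set) UNIV" "f summable_on UNIV"
  shows "(\<lambda>n. f (g n)) sums infsum f UNIV"
  using assms has_sum_reindex_bij_betw[OF assms(1), of f] has_sum_imp_sums
  by (auto simp: summable_iff_has_sum_infsum)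

lemma summable_on_of_deriv_le:
  fixes f f' :: "'a \<Rightarrow> real \<Rightarrow> real"
  assumes der: "\<And>a t. \<bar>t\<bar> < \<tau> \<Longrightarrow> (f a has_real_derivative f' a t) (at t)"
    and bnd: "\<And>a t. \<bar>t\<bar> < \<tau> \<Longrightarrow> \<bar>f' a t\<bar> \<le> B a"
    and B: "B summable_on UNIV" and f0: "(\<lambda>a. f a 0) summable_on UNIV" and t: "\<bar>t\<bar> < \<tau>"
  shows "(\<lambda>a. f a t) summable_on UNIV"
proof (rule summable_on_comparison_abs)
  show "(\<lambda>a. \<bar>f a 0\<bar> + B a * \<bar>t\<bar>) summable_on UNIV"
    using f0 B summable_on_iff_abs_summable_on_real[of "\<lambda>a. f a 0"]
    by (intro summable_on_add summable_on_cmult_left) auto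
  show "\<bar>f a t\<bar> \<le> \<bar>f a 0\<bar> + B a * \<bar>t\<bar>" for a
    using abs_diff_le_deriv_bound[of \<tau> "f a" "f' a" "B a" t] der bnd t by force
qed

lemma has_real_derivative_infsum:
  fixes f f' :: "'a::countable \<Rightarrow> real \<Rightarrow> real"
  assumes inf: "infinite (UNIV :: 'a set)" and \<tau>: "0 < \<tau>"
    and der: "\<And>a t. \<bar>t\<bar> < \<tau> \<Longrightarrow> (f a has_real_derivative f' a t) (at t)"
    and bnd: "\<And>a t. \<bar>t\<bar> < \<tau> \<Longrightarrow> \<bar>f' a t\<bar> \<le> B a"
    and B: "B summable_on UNIV"
    and f0: "(\<lambda>a. f a 0) summable_on UNIV"
  shows "((\<lambda>t. infsum (\<lambda>a. f a t) UNIV) has_real_derivative infsum (\<lambda>a. f' a 0) UNIV) (at 0)"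
proof -
  obtain g :: "nat \<Rightarrow> 'a" where g: "bij_betw g UNIV UNIV"
    using countableE_infinite[OF _ inf] bij_betw_inv by blast
  define S where "S = {-\<tau><..<\<tau>}"
  have S: "t \<in> S \<longleftrightarrow> \<bar>t\<bar> < \<tau>" for t
    unfolding S_def by auto
  have "uniform_limit S (\<lambda>n t. \<Sum>i<n. f' (g i) t) (\<lambda>t. \<Sum>i. f' (g i) t) sequentially"
  proof (rule Weierstrass_m_test_ev)
    show "\<forall>\<^sub>F n in sequentially. \<forall>t\<in>S. norm (f' (g n) t) \<le> B (g n)"
      using bnd S by (intro always_eventually) simp
    show "summable (\<lambda>n. B (g n))"
      using sums_infsum_reindex[OF g B] by (rule sums_summable)
  qed
  then have unif: "uniformly_convergent_on S (\<lambda>n t. \<Sum>i<n. f' (g i) t)"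
    unfolding uniformly_convergent_on_def by blast
  have D: "((\<lambda>t. \<Sum>n. f (g n) t) has_real_derivative (\<Sum>n. f' (g n) 0)) (at 0)"
  proof (rule has_field_derivative_series'(2)[of S "\<lambda>n. f (g n)" "\<lambda>n. f' (g n)" 0 0])
    show "(f (g n) has_real_derivative f' (g n) t) (at t within S)" if "t \<in> S" for n t
      using der that S by (auto intro: has_field_derivative_at_within)
    show "summable (\<lambda>n. f (g n) 0)"
      using sums_infsum_reindex[OF g f0] by (rule sums_summable)
  qed (use unif \<tau> in \<open>auto simp: S_def\<close>)
  have ev: "\<forall>\<^sub>F t in nhds 0. (\<Sum>n. f (g n) t) = infsum (\<lambda>a. f a t) UNIV"
  proof -
    have "\<forall>\<^sub>F t in nhds 0. t \<in> S"
      using \<tau> by (intro eventually_nhds_in_open) (auto simp: S_def)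
    then show ?thesis
      by eventually_elim
        (use sums_infsum_reindex[OF g summable_on_of_deriv_le[OF der bnd B f0]] S in \<open>auto simp: sums_iff\<close>)
  qed
  have lim: "(\<Sum>n. f' (g n) 0) = infsum (\<lambda>a. f' a 0) UNIV"
    using sums_infsum_reindex[OF g summable_on_comparison_abs[OF B, of "\<lambda>a. f' a 0"]] bnd \<tau>
    by (simp add: sums_iff)
  show ?thesis
    using DERIV_cong_ev[OF refl ev refl] D lim by simp
qed

section \<open>Power series in several variables\<close>

definition mdegree :: "('n::finite \<Rightarrow> nat) \<Rightarrow> nat" where
  "mdegree a = (\<Sum>i\<in>UNIV. a i)"

definition mpow :: "real^'n::finite \<Rightarrow> ('n \<Rightarrow> nat) \<Rightarrow> real" where
  "mpow z a = (\<Prod>i\<in>UNIV. (z$i) ^ a i)"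

definition polydisc :: "real^'n::finite \<Rightarrow> real \<Rightarrow> (real^'n) set" where
  "polydisc x0 \<rho> = {y. \<forall>i. \<bar>(y - x0)$i\<bar> < \<rho>}"

definition mpseries :: "(('n::finite \<Rightarrow> nat) \<Rightarrow> real) \<Rightarrow> real^'n \<Rightarrow> real^'n \<Rightarrow> real" where
  "mpseries c x0 y = infsum (\<lambda>a. c a * mpow (y - x0) a) UNIV"

definition mps_abs_convergent :: "(('n::finite \<Rightarrow> nat) \<Rightarrow> real) \<Rightarrow> real \<Rightarrow> bool" where
  "mps_abs_convergent c \<rho> \<longleftrightarrow> (\<forall>r. 0 \<le> r \<and> r < \<rho> \<longrightarrow> (\<lambda>a. \<bar>c a\<bar> * r ^ mdegree a) summable_on UNIV)"

definition incr_at :: "'n \<Rightarrow> ('n \<Rightarrow> nat) \<Rightarrow> 'n \<Rightarrow> nat" where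
  "incr_at i a = a(i := Suc (a i))"

definition deriv_coeffs :: "real^'n::finite \<Rightarrow> (('n \<Rightarrow> nat) \<Rightarrow> real) \<Rightarrow> ('n \<Rightarrow> nat) \<Rightarrow> real" where
  "deriv_coeffs w c a = (\<Sum>i\<in>UNIV. w$i * (real (a i) + 1) * c (incr_at i a))"

definition l1_norm :: "real^'n::finite \<Rightarrow> real" where
  "l1_norm w = (\<Sum>i\<in>UNIV. \<bar>w$i\<bar>)"

lemma open_polydisc: "open (polydisc x0 \<rho>)"
proof -
  have "polydisc x0 \<rho> = (\<Inter>i\<in>UNIV. {y. \<bar>(y - x0)$i\<bar> < \<rho>})"
    unfolding polydisc_def by auto
  then show ?thesis
    by (auto intro!: open_INT open_Collect_less continuous_intros)
qed

lemma polydisc_inner_radius: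
  assumes "y \<in> polydisc x0 \<rho>"
  obtains r where "0 < r" "r < \<rho>" "y \<in> polydisc x0 r"
proof -
  define m where "m = Max (range (\<lambda>i. \<bar>(y - x0)$i\<bar>))"
  have m: "\<And>i. \<bar>(y - x0)$i\<bar> \<le> m"
    unfolding m_def by (auto intro: Max_ge)
  have "m \<in> range (\<lambda>i. \<bar>(y - x0)$i\<bar>)"
    unfolding m_def by (auto intro: Max_in)
  then have "m < \<rho>"
    using assms unfolding polydisc_def by auto
  moreover have "0 \<le> m"
    using m[of undefined] by linarith
  moreover have "\<bar>(y - x0)$i\<bar> < (m + \<rho>) / 2" for i
    using m[of i] \<open>m < \<rho>\<close> by (simp add: field_simps)
  ultimately show ?thesis
    by (intro that[of "(m + \<rho>) / 2"]) (auto simp: polydisc_def)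
qed

lemma eventually_line_in_open:
  fixes y w :: "'a::real_normed_vector"
  assumes "open S" "y \<in> S"
  shows "\<forall>\<^sub>F t in nhds 0. y + t *\<^sub>R w \<in> S"
proof -
  have "((\<lambda>t. y + t *\<^sub>R w) \<longlongrightarrow> y + 0 *\<^sub>R w) (nhds 0)"
    by (intro tendsto_intros filterlim_ident)
  then show ?thesis
    using assms by (simp add: topological_tendstoD)
qed

lemma mdegree_incr_at [simp]: "mdegree (incr_at i a) = Suc (mdegree a)"
proof -
  have "incr_at i a = (\<lambda>j. a j + (if j = i then 1 else 0))"
    unfolding incr_at_def by auto
  then show ?thesis
    unfolding mdegree_def by (simp add: sum.distrib)
qed

lemma incr_at_decr: "a i \<noteq> 0 \<Longrightarrow> incr_at i (a(i := a i - 1)) = a"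
  unfolding incr_at_def by auto

lemma decr_incr_at [simp]: "(incr_at i a)(i := incr_at i a i - 1) = a"
  unfolding incr_at_def by auto

lemma inj_incr_at: "inj (incr_at i)"
  by (metis decr_incr_at injI)

lemma range_incr_at: "range (incr_at i) = {a. a i \<noteq> 0}"
proof
  show "range (incr_at i) \<subseteq> {a. a i \<noteq> 0}"
    by (auto simp: incr_at_def)
  show "{a. a i \<noteq> 0} \<subseteq> range (incr_at i)"
  proof
    fix a :: "'a \<Rightarrow> nat" assume "a \<in> {a. a i \<noteq> 0}"
    then have "a i \<noteq> 0"
      by simp
    then have "a = incr_at i (a(i := a i - 1))"
      by (rule incr_at_decr[symmetric])
    then show "a \<in> range (incr_at i)"
      by (metis rangeI)
  qed
qed

lemma le_mdegree: "a i \<le> mdegree a"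
  unfolding mdegree_def by (rule member_le_sum) auto

lemma abs_mpow_le:
  assumes "\<And>i. \<bar>z$i\<bar> \<le> r"
  shows "\<bar>mpow z a\<bar> \<le> r ^ mdegree a"
proof -
  have "\<bar>mpow z a\<bar> = (\<Prod>i\<in>UNIV. \<bar>z$i\<bar> ^ a i)"
    unfolding mpow_def by (simp add: abs_prod power_abs)
  also have "\<dots> \<le> (\<Prod>i\<in>UNIV. r ^ a i)"
    using assms by (intro prod_mono) (auto intro: power_mono)
  also have "\<dots> = r ^ mdegree a"
    unfolding mdegree_def by (simp add: power_sum)
  finally show ?thesis .
qed

lemma summable_on_incr_at:
  fixes g :: "('n \<Rightarrow> nat) \<Rightarrow> real"
  assumes "g summable_on UNIV"
  shows "(\<lambda>a. g (incr_at i a)) summable_on UNIV"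
proof -
  have "g summable_on range (incr_at i)"
    by (rule summable_on_subset_banach[OF assms]) auto
  then show ?thesis
    using summable_on_reindex[OF inj_incr_at[of i], of g] by (simp add: o_def)
qed

lemma infinite_multi_indices: "infinite (UNIV :: ('n \<Rightarrow> nat) set)"
proof -
  have "inj (\<lambda>n::nat. \<lambda>_::'n. n)"
    by (auto simp: inj_def fun_eq_iff)
  then show ?thesis
    using range_inj_infinite infinite_super subset_UNIV by metis
qed

lemma of_nat_mult_power_le:
  fixes r r' :: real
  assumes "0 < r" "r < r'"
  obtains K where "\<And>n. real n * r ^ (n - 1) \<le> K * r' ^ n"
proof -
  define q where "q = r / r'"
  have q: "norm q < 1" "0 \<le> q"
    using assms unfolding q_def by auto
  have "(\<lambda>n. of_nat n * q ^ n) \<longlonglongrightarrow> 0"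
    by (rule powser_times_n_limit_0[OF q(1)])
  then have "Bseq (\<lambda>n. of_nat n * q ^ n)"
    by (rule convergent_imp_Bseq[OF convergentI])
  then obtain K where K: "\<And>n. norm (of_nat n * q ^ n) \<le> K"
    by (meson BseqE less_imp_le)
  have "real n * r ^ (n - 1) \<le> (K / r) * r' ^ n" for n
  proof (cases n)
    case (Suc m)
    have "(real n * r ^ (n - 1)) * r = real n * q ^ n * r' ^ n"
      using Suc assms unfolding q_def by (simp add: power_divide)
    also have "\<dots> \<le> K * r' ^ n"
      using K[of n] q assms by (intro mult_right_mono) auto
    finally show ?thesis
      using assms by (simp add: field_simps)
  qed (use K[of 0] assms in simp)
  then show ?thesis
    by (rule that)
qed

lemma mps_abs_convergent_deriv_bound:
  assumes "mps_abs_convergent c \<rho>" "0 < r" "r < \<rho>"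
  shows "(\<lambda>a. \<bar>c a\<bar> * real (mdegree a) * r ^ (mdegree a - 1)) summable_on UNIV"
proof -
  define r' where "r' = (r + \<rho>) / 2"
  have r': "r < r'" "r' < \<rho>" "0 \<le> r'"
    using assms unfolding r'_def by auto
  obtain K where K: "\<And>n. real n * r ^ (n - 1) \<le> K * r' ^ n"
    using of_nat_mult_power_le[OF assms(2) r'(1)] by blast
  have "(\<lambda>a. (\<bar>c a\<bar> * r' ^ mdegree a) * K) summable_on UNIV"
    using assms(1) r' unfolding mps_abs_convergent_def by (intro summable_on_cmult_left) auto
  then show ?thesis
  proof (rule summable_on_comparison_abs)
    fix a
    have "\<bar>c a\<bar> * (real (mdegree a) * r ^ (mdegree a - 1)) \<le> \<bar>c a\<bar> * (K * r' ^ mdegree a)"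
      by (rule mult_left_mono[OF K]) simp
    then show "\<bar>\<bar>c a\<bar> * real (mdegree a) * r ^ (mdegree a - 1)\<bar> \<le> \<bar>c a\<bar> * r' ^ mdegree a * K"
      using assms by (simp add: abs_mult ac_simps)
  qed
qed

lemma mps_abs_convergent_deriv_coeffs:
  assumes conv: "mps_abs_convergent c \<rho>"
  shows "mps_abs_convergent (deriv_coeffs w c) \<rho>"
  unfolding mps_abs_convergent_def
proof (intro allI impI)
  fix r assume r: "0 \<le> r \<and> r < \<rho>"
  define s where "s = (r + \<rho>) / 2"
  have s: "0 < s" "s < \<rho>" "r \<le> s"
    using r unfolding s_def by auto
  define B where "B a = \<bar>c a\<bar> * real (mdegree a) * s ^ (mdegree a - 1)" for a
  have "(\<lambda>b. \<Sum>i\<in>UNIV. \<bar>w$i\<bar> * B (incr_at i b)) summable_on UNIV"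
    using mps_abs_convergent_deriv_bound[OF conv s(1,2)] unfolding B_def
    by (intro summable_on_sum summable_on_cmult_right summable_on_incr_at) auto
  then show "(\<lambda>a. \<bar>deriv_coeffs w c a\<bar> * r ^ mdegree a) summable_on UNIV"
  proof (rule summable_on_comparison_abs)
    fix b :: "'a \<Rightarrow> nat"
    have "\<bar>deriv_coeffs w c b\<bar> * r ^ mdegree b
        \<le> (\<Sum>i\<in>UNIV. \<bar>w$i * (real (b i) + 1) * c (incr_at i b)\<bar> * r ^ mdegree b)"
      unfolding deriv_coeffs_def sum_distrib_right[symmetric] using r
      by (intro mult_right_mono sum_abs) auto
    also have "\<dots> \<le> (\<Sum>i\<in>UNIV. \<bar>w$i\<bar> * B (incr_at i b))"
    proof (rule sum_mono)
      fix i
      have "(real (b i) + 1) * r ^ mdegree b \<le> real (mdegree (incr_at i b)) * s ^ (mdegree (incr_at i b) - 1)"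
        using le_mdegree[of b i] r s power_mono[of r s "mdegree b"] by (intro mult_mono) auto
      then have "\<bar>w$i\<bar> * \<bar>c (incr_at i b)\<bar> * ((real (b i) + 1) * r ^ mdegree b)
          \<le> \<bar>w$i\<bar> * \<bar>c (incr_at i b)\<bar> * (real (mdegree (incr_at i b)) * s ^ (mdegree (incr_at i b) - 1))"
        by (rule mult_left_mono) simp
      then show "\<bar>w$i * (real (b i) + 1) * c (incr_at i b)\<bar> * r ^ mdegree b \<le> \<bar>w$i\<bar> * B (incr_at i b)"
        unfolding B_def by (simp add: abs_mult ac_simps)
    qed
    finally show "\<bar>\<bar>deriv_coeffs w c b\<bar> * r ^ mdegree b\<bar> \<le> (\<Sum>i\<in>UNIV. \<bar>w$i\<bar> * B (incr_at i b))"
      using r by simp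
  qed
qed

lemma mpow_fun_upd: "mpow z (a(i := m)) = (z$i) ^ m * (\<Prod>j\<in>UNIV - {i}. (z$j) ^ a j)"
proof -
  have "mpow z (a(i := m)) = (z$i) ^ m * (\<Prod>j\<in>UNIV - {i}. (z$j) ^ (a(i := m)) j)"
    unfolding mpow_def by (subst prod.remove[of _ i]) simp_all
  also have "(\<Prod>j\<in>UNIV - {i}. (z$j) ^ (a(i := m)) j) = (\<Prod>j\<in>UNIV - {i}. (z$j) ^ a j)"
    by (rule prod.cong) auto
  finally show ?thesis .
qed

lemma has_real_derivative_mpow_line:
  "((\<lambda>t. mpow (z + t *\<^sub>R w) a) has_real_derivative
     (\<Sum>i\<in>UNIV. real (a i) * w$i * mpow (z + t *\<^sub>R w) (a(i := a i - 1)))) (at t)"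
proof -
  have "((\<lambda>u. z$i + u * w$i) has_real_derivative w$i) (at t)" for i
    by (auto intro!: derivative_eq_intros)
  then have "((\<lambda>u. (z$i + u * w$i) ^ a i) has_real_derivative
      real (a i) * (w$i * (z$i + t * w$i) ^ (a i - Suc 0))) (at t)" for i
    by (rule DERIV_power)
  then have "((\<lambda>u. \<Prod>i\<in>UNIV. (z$i + u * w$i) ^ a i) has_real_derivative
     (\<Sum>i\<in>UNIV. real (a i) * (w$i * (z$i + t * w$i) ^ (a i - Suc 0)) *
        (\<Prod>j\<in>UNIV - {i}. (z$j + t * w$j) ^ a j))) (at t)"
    by (rule has_field_derivative_prod)
  moreover have "(\<lambda>t. mpow (z + t *\<^sub>R w) a) = (\<lambda>u. \<Prod>i\<in>UNIV. (z$i + u * w$i) ^ a i)"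
    by (simp add: mpow_def)
  moreover have "mpow (z + t *\<^sub>R w) (a(i := a i - 1))
      = (z$i + t * w$i) ^ (a i - Suc 0) * (\<Prod>j\<in>UNIV - {i}. (z$j + t * w$j) ^ a j)" for i
    by (simp add: mpow_fun_upd)
  ultimately show ?thesis
    by (simp add: ac_simps)
qed

lemma abs_mpow_deriv_term_le:
  assumes "\<And>j. \<bar>z$j\<bar> \<le> r" "0 \<le> r"
  shows "\<bar>real (a i) * w$i * mpow z (a(i := a i - 1))\<bar> \<le> \<bar>w$i\<bar> * (real (mdegree a) * r ^ (mdegree a - 1))"
proof (cases "a i = 0")
  case False
  have "Suc (mdegree (a(i := a i - 1))) = mdegree a"
    using arg_cong[OF incr_at_decr[of a i, OF False], of mdegree] by simp
  then have "mdegree (a(i := a i - 1)) = mdegree a - 1"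
    by arith
  then have "real (a i) * \<bar>mpow z (a(i := a i - 1))\<bar> \<le> real (mdegree a) * r ^ (mdegree a - 1)"
    using le_mdegree[of a i] abs_mpow_le[OF assms(1), of "a(i := a i - 1)"] assms(2)
    by (intro mult_mono) auto
  then have "\<bar>w$i\<bar> * (real (a i) * \<bar>mpow z (a(i := a i - 1))\<bar>)
      \<le> \<bar>w$i\<bar> * (real (mdegree a) * r ^ (mdegree a - 1))"
    by (rule mult_left_mono) simp
  then show ?thesis
    by (simp add: abs_mult ac_simps)
qed (use assms in simp)

lemma abs_mpow_deriv_terms_le:
  assumes "\<And>j. \<bar>z$j\<bar> \<le> r" "0 \<le> r"
  shows "\<bar>\<Sum>i\<in>UNIV. real (a i) * w$i * mpow z (a(i := a i - 1))\<bar>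
           \<le> l1_norm w * (real (mdegree a) * r ^ (mdegree a - 1))"
proof -
  have "\<bar>\<Sum>i\<in>UNIV. real (a i) * w$i * mpow z (a(i := a i - 1))\<bar>
      \<le> (\<Sum>i\<in>UNIV. \<bar>w$i\<bar> * (real (mdegree a) * r ^ (mdegree a - 1)))"
    using assms by (intro order_trans[OF sum_abs] sum_mono abs_mpow_deriv_term_le) auto
  also have "\<dots> = l1_norm w * (real (mdegree a) * r ^ (mdegree a - 1))"
    unfolding l1_norm_def by (simp add: sum_distrib_right)
  finally show ?thesis .
qed

lemma polydisc_line_bound:
  assumes "y \<in> polydisc x0 \<rho>"
  obtains r \<tau> where "0 < r" "r < \<rho>" "0 < \<tau>" "\<And>t i. \<bar>t\<bar> < \<tau> \<Longrightarrow> \<bar>(y + t *\<^sub>R w - x0)$i\<bar> \<le> r"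
proof -
  obtain r1 where r1: "0 < r1" "r1 < \<rho>" "y \<in> polydisc x0 r1"
    using polydisc_inner_radius[OF assms] by blast
  define r where "r = (r1 + \<rho>) / 2"
  define W where "W = l1_norm w"
  have W: "0 \<le> W" "\<And>i. \<bar>w$i\<bar> \<le> W"
    unfolding W_def l1_norm_def by (auto intro: sum_nonneg member_le_sum)
  define \<tau> where "\<tau> = (r - r1) / (W + 1)"
  have \<tau>: "0 < \<tau>" "\<tau> * W \<le> r - r1"
    using r1 W unfolding \<tau>_def r_def by (auto simp: field_simps)
  have "\<bar>(y + t *\<^sub>R w - x0)$i\<bar> \<le> r" if "\<bar>t\<bar> < \<tau>" for t i
  proof -
    have "\<bar>t\<bar> * \<bar>w$i\<bar> \<le> \<tau> * W"
      using that W \<tau> by (intro mult_mono) auto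
    moreover have "\<bar>(y - x0)$i\<bar> < r1"
      using r1(3) unfolding polydisc_def by simp
    ultimately show ?thesis
      using \<tau> abs_triangle_ineq[of "(y - x0)$i" "t * w$i"] by (simp add: abs_mult)
  qed
  then show ?thesis
    using r1 \<tau> by (intro that[of r \<tau>]) (auto simp: r_def)
qed

lemma has_real_derivative_mpseries_termwise:
  assumes conv: "mps_abs_convergent c \<rho>" and y: "y \<in> polydisc x0 \<rho>"
  shows "((\<lambda>t. mpseries c x0 (y + t *\<^sub>R w)) has_real_derivative
           infsum (\<lambda>a. c a * (\<Sum>i\<in>UNIV. real (a i) * w$i * mpow (y - x0) (a(i := a i - 1)))) UNIV) (at 0)"
proof -
  define z where "z = y - x0"
  obtain r \<tau> where r: "0 < r" "r < \<rho>" and \<tau>: "0 < \<tau>"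
    and line: "\<And>t i. \<bar>t\<bar> < \<tau> \<Longrightarrow> \<bar>(z + t *\<^sub>R w)$i\<bar> \<le> r"
    using polydisc_line_bound[OF y, of w] unfolding z_def by (metis add_diff_eq diff_add_eq)
  define W where "W = l1_norm w"
  define f where "f a t = c a * mpow (z + t *\<^sub>R w) a" for a t
  define f' where "f' a t = c a * (\<Sum>i\<in>UNIV. real (a i) * w$i * mpow (z + t *\<^sub>R w) (a(i := a i - 1)))" for a t
  define B where "B a = W * (\<bar>c a\<bar> * real (mdegree a) * r ^ (mdegree a - 1))" for a
  have "((\<lambda>t. infsum (\<lambda>a. f a t) UNIV) has_real_derivative infsum (\<lambda>a. f' a 0) UNIV) (at 0)"
  proof (rule has_real_derivative_infsum[OF infinite_multi_indices \<tau>])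
    show "(f a has_real_derivative f' a t) (at t)" for a t
      unfolding f_def f'_def by (rule DERIV_cmult[OF has_real_derivative_mpow_line])
    show "\<bar>f' a t\<bar> \<le> B a" if "\<bar>t\<bar> < \<tau>" for a t
    proof -
      have "\<bar>\<Sum>i\<in>UNIV. real (a i) * w$i * mpow (z + t *\<^sub>R w) (a(i := a i - 1))\<bar>
          \<le> W * (real (mdegree a) * r ^ (mdegree a - 1))"
        unfolding W_def using line[OF that] r by (intro abs_mpow_deriv_terms_le) auto
      then have "\<bar>f' a t\<bar> \<le> \<bar>c a\<bar> * (W * (real (mdegree a) * r ^ (mdegree a - 1)))"
        unfolding f'_def abs_mult by (rule mult_left_mono) simp
      then show ?thesis
        unfolding B_def by (simp add: ac_simps)
    qed
    show "B summable_on UNIV"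
      unfolding B_def by (intro summable_on_cmult_right mps_abs_convergent_deriv_bound[OF conv r(1,2)])
    show "(\<lambda>a. f a 0) summable_on UNIV"
    proof (rule summable_on_comparison_abs)
      show "(\<lambda>a. \<bar>c a\<bar> * r ^ mdegree a) summable_on UNIV"
        using conv r unfolding mps_abs_convergent_def by simp
      show "\<bar>f a 0\<bar> \<le> \<bar>c a\<bar> * r ^ mdegree a" for a
        using abs_mpow_le[of z r a] line[of 0] \<tau> unfolding f_def abs_mult
        by (simp add: mult_left_mono)
    qed
  qed
  moreover have "mpseries c x0 (y + t *\<^sub>R w) = infsum (\<lambda>a. f a t) UNIV" for t
    unfolding mpseries_def f_def z_def by (simp add: algebra_simps)
  ultimately show ?thesis
    unfolding f'_def z_def by simp
qed

lemma infsum_mpow_deriv_terms: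
  assumes conv: "mps_abs_convergent c \<rho>" and y: "y \<in> polydisc x0 \<rho>"
  shows "infsum (\<lambda>a. c a * (\<Sum>i\<in>UNIV. real (a i) * w$i * mpow (y - x0) (a(i := a i - 1)))) UNIV
           = mpseries (deriv_coeffs w c) x0 y"
proof -
  define z where "z = y - x0"
  obtain r where r: "0 < r" "r < \<rho>" "y \<in> polydisc x0 r"
    using polydisc_inner_radius[OF y] by blast
  have z_le: "\<bar>z$i\<bar> \<le> r" for i
    using r(3) unfolding polydisc_def z_def by (simp add: less_imp_le)
  define T where "T i a = c a * (real (a i) * w$i * mpow z (a(i := a i - 1)))" for i a
  have T_summable: "T i summable_on UNIV" for i
  proof (rule summable_on_comparison_abs)
    show "(\<lambda>a. \<bar>c a\<bar> * (\<bar>w$i\<bar> * (real (mdegree a) * r ^ (mdegree a - 1)))) summable_on UNIV"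
      using summable_on_cmult_right[OF mps_abs_convergent_deriv_bound[OF conv r(1,2)], of "\<bar>w$i\<bar>"]
      by (simp add: algebra_simps)
    show "\<bar>T i a\<bar> \<le> \<bar>c a\<bar> * (\<bar>w$i\<bar> * (real (mdegree a) * r ^ (mdegree a - 1)))" for a
      unfolding T_def abs_mult[of "c a"] using r z_le by (intro mult_left_mono abs_mpow_deriv_term_le) auto
  qed
  have T_incr_at: "T i (incr_at i b) = w$i * (real (b i) + 1) * c (incr_at i b) * mpow z b" for i b
    unfolding T_def by (simp add: incr_at_def)
  have T_reindex: "infsum (T i) UNIV = infsum (\<lambda>b. T i (incr_at i b)) UNIV" for i
  proof -
    have "infsum (T i) UNIV = infsum (T i) (range (incr_at i))"
      by (rule infsum_cong_neutral) (auto simp: range_incr_at T_def)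
    then show ?thesis
      using infsum_reindex[OF inj_incr_at[of i], of "T i"] by (simp add: o_def)
  qed
  have "infsum (\<lambda>a. c a * (\<Sum>i\<in>UNIV. real (a i) * w$i * mpow z (a(i := a i - 1)))) UNIV
      = infsum (\<lambda>a. \<Sum>i\<in>UNIV. T i a) UNIV"
    unfolding T_def by (simp add: sum_distrib_left)
  also have "\<dots> = (\<Sum>i\<in>UNIV. infsum (T i) UNIV)"
    using T_summable by (intro infsum_sum) auto
  also have "\<dots> = (\<Sum>i\<in>UNIV. infsum (\<lambda>b. T i (incr_at i b)) UNIV)"
    using T_reindex by simp
  also have "\<dots> = infsum (\<lambda>b. \<Sum>i\<in>UNIV. T i (incr_at i b)) UNIV"
    using summable_on_incr_at[OF T_summable] by (intro infsum_sum[symmetric]) auto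
  also have "\<dots> = mpseries (deriv_coeffs w c) x0 y"
    unfolding mpseries_def deriv_coeffs_def z_def T_incr_at by (simp add: sum_distrib_right)
  finally show ?thesis
    unfolding z_def .
qed

lemma has_real_derivative_mpseries:
  assumes "mps_abs_convergent c \<rho>" "y \<in> polydisc x0 \<rho>"
  shows "((\<lambda>t. mpseries c x0 (y + t *\<^sub>R w)) has_real_derivative mpseries (deriv_coeffs w c) x0 y) (at 0)"
  using has_real_derivative_mpseries_termwise[OF assms] infsum_mpow_deriv_terms[OF assms] by simp

section \<open>Directional derivatives of analytic functions\<close>

fun dir_derivs :: "(real^'n::finite \<Rightarrow> real) \<Rightarrow> (real^'n) list \<Rightarrow> real^'n \<Rightarrow> real" where
  "dir_derivs f [] p = f p"
| "dir_derivs f (w # ws) p = deriv (\<lambda>t. dir_derivs f ws (p + t *\<^sub>R w)) 0"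

lemma pderivs_eq_dir_derivs: "pderivs is f p = dir_derivs f (map (\<lambda>i. axis i 1) is) p"
  by (induction "is" arbitrary: p) (simp_all add: pderiv_coord_def)

lemma mps_abs_convergent_foldr_deriv_coeffs:
  "mps_abs_convergent c \<rho> \<Longrightarrow> mps_abs_convergent (foldr deriv_coeffs ws c) \<rho>"
  by (induction ws) (auto intro: mps_abs_convergent_deriv_coeffs)

lemma dir_derivs_mpseries:
  assumes conv: "mps_abs_convergent c \<rho>"
    and eq: "\<And>y. y \<in> polydisc x0 \<rho> \<Longrightarrow> f y = mpseries c x0 y"
    and y: "y \<in> polydisc x0 \<rho>"
  shows "dir_derivs f ws y = mpseries (foldr deriv_coeffs ws c) x0 y"
    and "((\<lambda>t. dir_derivs f ws (y + t *\<^sub>R w)) has_real_derivative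
           mpseries (deriv_coeffs w (foldr deriv_coeffs ws c)) x0 y) (at 0)"
proof -
  have dir_derivs_eq: "dir_derivs f ws y = mpseries (foldr deriv_coeffs ws c) x0 y"
    if "y \<in> polydisc x0 \<rho>" for ws y
    using that
  proof (induction ws arbitrary: y)
    case (Cons v ws)
    have "\<forall>\<^sub>F t in nhds 0. dir_derivs f ws (y + t *\<^sub>R v) = mpseries (foldr deriv_coeffs ws c) x0 (y + t *\<^sub>R v)"
      using eventually_line_in_open[OF open_polydisc Cons.prems] by eventually_elim (rule Cons.IH)
    then have "((\<lambda>t. dir_derivs f ws (y + t *\<^sub>R v)) has_real_derivative
                 mpseries (foldr deriv_coeffs (v # ws) c) x0 y) (at 0)"
      using DERIV_cong_ev has_real_derivative_mpseries[OF mps_abs_convergent_foldr_deriv_coeffs[OF conv] Cons.prems]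
      by fastforce
    then show ?case
      by (simp add: DERIV_imp_deriv)
  qed (simp add: eq)
  then show "dir_derivs f ws y = mpseries (foldr deriv_coeffs ws c) x0 y"
    using y .
  have "\<forall>\<^sub>F t in nhds 0. dir_derivs f ws (y + t *\<^sub>R w) = mpseries (foldr deriv_coeffs ws c) x0 (y + t *\<^sub>R w)"
    using eventually_line_in_open[OF open_polydisc y] by eventually_elim (rule dir_derivs_eq)
  then show "((\<lambda>t. dir_derivs f ws (y + t *\<^sub>R w)) has_real_derivative
               mpseries (deriv_coeffs w (foldr deriv_coeffs ws c)) x0 y) (at 0)"
    using DERIV_cong_ev has_real_derivative_mpseries[OF mps_abs_convergent_foldr_deriv_coeffs[OF conv] y]
    by fastforce
qed

lemma real_analytic_at_mpseries:
  fixes f :: "real^'n::finite \<Rightarrow> real"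
  assumes "real_analytic_at f x0"
  obtains \<rho> c where "0 < \<rho>" "mps_abs_convergent c \<rho>" "\<And>y. y \<in> polydisc x0 \<rho> \<Longrightarrow> f y = mpseries c x0 y"
proof -
  obtain r c where r: "0 < r" and has_sum: "\<And>y. norm (y - x0) < r \<Longrightarrow>
       ((\<lambda>a. c a * mpow (y - x0) a) has_sum f y) UNIV"
    using assms unfolding real_analytic_at_def mpow_def by fastforce
  define \<rho> where "\<rho> = r / real CARD('n)"
  have norm_less: "norm (y - x0) < r" if "y \<in> polydisc x0 \<rho>" for y
  proof -
    have "\<bar>(y - x0)$i\<bar> < \<rho>" for i
      using that unfolding polydisc_def by auto
    then have "(\<Sum>i\<in>UNIV. \<bar>(y - x0)$i\<bar>) < (\<Sum>i\<in>(UNIV::'n set). \<rho>)"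
      by (intro sum_strict_mono) auto
    with norm_le_l1_cart[of "y - x0"] have "norm (y - x0) < (\<Sum>i\<in>(UNIV::'n set). \<rho>)"
      by linarith
    then show ?thesis
      unfolding \<rho>_def by simp
  qed
  have "mps_abs_convergent c \<rho>"
    unfolding mps_abs_convergent_def
  proof (intro allI impI)
    fix s assume s: "0 \<le> s \<and> s < \<rho>"
    define y where "y = x0 + (\<chi> i. s)"
    have "y \<in> polydisc x0 \<rho>"
      unfolding y_def polydisc_def using s by simp
    then have "(\<lambda>a. \<bar>c a * mpow (y - x0) a\<bar>) summable_on UNIV"
      using has_sum_imp_summable[OF has_sum[OF norm_less[OF \<open>y \<in> polydisc x0 \<rho>\<close>]]]
        summable_on_iff_abs_summable_on_real[of "\<lambda>a. c a * mpow (y - x0) a"] by simp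
    moreover have "mpow (y - x0) a = s ^ mdegree a" for a
      unfolding mpow_def mdegree_def y_def by (simp add: power_sum)
    ultimately show "(\<lambda>a. \<bar>c a\<bar> * s ^ mdegree a) summable_on UNIV"
      using s by (simp add: abs_mult)
  qed
  moreover have "f y = mpseries c x0 y" if "y \<in> polydisc x0 \<rho>" for y
    unfolding mpseries_def using has_sum[OF norm_less[OF that]] by (rule infsumI[symmetric])
  ultimately show ?thesis
    using r by (intro that[of \<rho> c]) (auto simp: \<rho>_def)
qed

lemma mpseries_center: "mpseries c x0 x0 = c (\<lambda>_. 0)"
proof -
  have "mpseries c x0 x0 = infsum (\<lambda>a. c a * mpow 0 a) UNIV"
    unfolding mpseries_def by simp
  also have "\<dots> = infsum (\<lambda>a. c a * mpow 0 a) {\<lambda>_. 0}"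
  proof (intro infsum_cong_neutral)
    fix a :: "'a \<Rightarrow> nat" assume "a \<in> UNIV - {\<lambda>_. 0}"
    then obtain i where "a i \<noteq> 0"
      by auto
    then show "c a * mpow 0 a = 0"
      unfolding mpow_def by (auto simp: prod_zero_iff)
  qed auto
  finally show ?thesis
    unfolding mpow_def by simp
qed

lemma dir_derivs_analytic_coeffs:
  assumes "real_analytic_at f p"
  obtains c where "\<And>ws. dir_derivs f ws p = foldr deriv_coeffs ws c (\<lambda>_. 0)"
proof -
  obtain \<rho> c where "0 < \<rho>" "mps_abs_convergent c \<rho>" "\<And>y. y \<in> polydisc p \<rho> \<Longrightarrow> f y = mpseries c p y"
    using real_analytic_at_mpseries[OF assms] by blast
  moreover from \<open>0 < \<rho>\<close> have "p \<in> polydisc p \<rho>"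
    unfolding polydisc_def by simp
  ultimately show ?thesis
    using dir_derivs_mpseries(1) mpseries_center that by metis
qed

lemma has_real_derivative_dir_derivs:
  assumes "real_analytic_at f p"
  shows "((\<lambda>t. dir_derivs f ws (p + t *\<^sub>R w)) has_real_derivative dir_derivs f (w # ws) p) (at 0)"
proof -
  obtain \<rho> c where "0 < \<rho>" "mps_abs_convergent c \<rho>" "\<And>y. y \<in> polydisc p \<rho> \<Longrightarrow> f y = mpseries c p y"
    using real_analytic_at_mpseries[OF assms] by blast
  moreover from \<open>0 < \<rho>\<close> have "p \<in> polydisc p \<rho>"
    unfolding polydisc_def by simp
  ultimately show ?thesis
    using dir_derivs_mpseries[of c \<rho> p f p "w # ws"] dir_derivs_mpseries(2)[of c \<rho> p f p ws w] by simp
qed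

lemma deriv_coeffs_axis: "deriv_coeffs (axis i 1) c a = (real (a i) + 1) * c (incr_at i a)"
proof -
  have "deriv_coeffs (axis i 1) c a = (\<Sum>j\<in>UNIV. if j = i then (real (a j) + 1) * c (incr_at j a) else 0)"
    unfolding deriv_coeffs_def by (rule sum.cong) (auto simp: axis_def)
  then show ?thesis
    by simp
qed

lemma deriv_coeffs_eq_sum_axis: "deriv_coeffs w c a = (\<Sum>i\<in>UNIV. w$i * deriv_coeffs (axis i 1) c a)"
  unfolding deriv_coeffs_axis by (simp add: deriv_coeffs_def ac_simps)

lemma deriv_coeffs_sum:
  "deriv_coeffs v (\<lambda>a. \<Sum>i\<in>I. l i * c i a) = (\<lambda>a. \<Sum>i\<in>I. l i * deriv_coeffs v (c i) a)"
  unfolding deriv_coeffs_def by (auto simp: sum_distrib_left ac_simps intro: sum.swap)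

lemma foldr_deriv_coeffs_sum:
  "foldr deriv_coeffs ws (\<lambda>a. \<Sum>i\<in>I. l i * c i a) = (\<lambda>a. \<Sum>i\<in>I. l i * foldr deriv_coeffs ws (c i) a)"
  by (induction ws) (simp_all add: deriv_coeffs_sum)

lemma dir_derivs_multilinear:
  assumes "real_analytic_at f p"
  shows "dir_derivs f (pre @ w # post) p = (\<Sum>i\<in>UNIV. w$i * dir_derivs f (pre @ axis i 1 # post) p)"
proof -
  obtain c where c: "\<And>ws. dir_derivs f ws p = foldr deriv_coeffs ws c (\<lambda>_. 0)"
    using dir_derivs_analytic_coeffs[OF assms] by blast
  have "deriv_coeffs w (foldr deriv_coeffs post c)
      = (\<lambda>a. \<Sum>i\<in>UNIV. w$i * deriv_coeffs (axis i 1) (foldr deriv_coeffs post c) a)"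
    using deriv_coeffs_eq_sum_axis by blast
  then show ?thesis
    unfolding c by (simp add: foldr_deriv_coeffs_sum)
qed

lemma abs_multilinear_le:
  fixes L :: "(real^'n::finite) list \<Rightarrow> real"
  assumes multilinear: "\<And>pre w post. L (pre @ w # post) = (\<Sum>i\<in>UNIV. w$i * L (pre @ axis i 1 # post))"
    and axes: "\<And>is. length is = length ws \<Longrightarrow> \<bar>L (map (\<lambda>i. axis i 1) is)\<bar> \<le> M"
  shows "\<bar>L ws\<bar> \<le> M * prod_list (map l1_norm ws)"
proof -
  have "\<bar>L (map (\<lambda>i. axis i 1) is @ vs)\<bar> \<le> M * prod_list (map l1_norm vs)"
    if "length is + length vs = length ws" for "is" vs
    using that
  proof (induction vs arbitrary: "is")
    case (Cons v vs)
    have IH: "\<bar>L (map (\<lambda>i. axis i 1) (is @ [i]) @ vs)\<bar> \<le> M * prod_list (map l1_norm vs)" for i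
      using Cons.IH[of "is @ [i]"] Cons.prems by simp
    have "\<bar>L (map (\<lambda>i. axis i 1) is @ v # vs)\<bar> \<le> (\<Sum>i\<in>UNIV. \<bar>v$i\<bar> * \<bar>L (map (\<lambda>i. axis i 1) (is @ [i]) @ vs)\<bar>)"
      using multilinear[of "map (\<lambda>i. axis i 1) is" v vs] by (simp add: order_trans[OF sum_abs] abs_mult)
    also have "\<dots> \<le> (\<Sum>i\<in>UNIV. \<bar>v$i\<bar> * (M * prod_list (map l1_norm vs)))"
      using IH by (intro sum_mono mult_left_mono) auto
    also have "\<dots> = M * prod_list (map l1_norm (v # vs))"
      unfolding l1_norm_def by (simp add: sum_distrib_left sum_distrib_right ac_simps)
    finally show ?case .
  qed (use axes in simp)
  from this[of "[]" ws] show ?thesis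
    by simp
qed

lemma abs_dir_derivs_le:
  assumes "real_analytic_at f p"
    and "\<And>is. length is = length ws \<Longrightarrow> \<bar>pderivs is f p\<bar> \<le> M"
  shows "\<bar>dir_derivs f ws p\<bar> \<le> M * prod_list (map l1_norm ws)"
  using assms by (intro abs_multilinear_le dir_derivs_multilinear) (auto simp: pderivs_eq_dir_derivs)

section \<open>Coefficients of bounded polynomials and Taylor expansion\<close>

lemma sum_power_dilate_diff:
  fixes a :: "nat \<Rightarrow> real"
  shows "(\<Sum>m<Suc n. a m * (2 * t) ^ m) - 2 ^ n * (\<Sum>m<Suc n. a m * t ^ m)
           = (\<Sum>m<n. a m * (2 ^ m - 2 ^ n) * t ^ m)"
proof -
  have "(\<Sum>m<Suc n. a m * (2 * t) ^ m) - 2 ^ n * (\<Sum>m<Suc n. a m * t ^ m)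
      = (\<Sum>m<n. a m * (2 * t) ^ m) - 2 ^ n * (\<Sum>m<n. a m * t ^ m)"
    by (simp add: power_mult_distrib algebra_simps)
  also have "\<dots> = (\<Sum>m<n. a m * (2 * t) ^ m - 2 ^ n * (a m * t ^ m))"
    by (simp add: sum_subtractf sum_distrib_left)
  also have "\<dots> = (\<Sum>m<n. a m * (2 ^ m - 2 ^ n) * t ^ m)"
    by (rule sum.cong) (simp_all add: power_mult_distrib algebra_simps)
  finally show ?thesis .
qed

lemma one_le_abs_power2_diff: "m < n \<Longrightarrow> 1 \<le> \<bar>(2::real) ^ m - 2 ^ n\<bar>"
proof -
  assume "m < n"
  then have "(2::real) ^ m * 2 \<le> 2 ^ n"
    by (metis power_Suc2 Suc_leI one_le_numeral power_increasing)
  moreover have "(1::real) \<le> 2 ^ m"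
    by simp
  ultimately show ?thesis
    by linarith
qed

lemma poly_lower_coeffs_le:
  fixes a :: "nat \<Rightarrow> real"
  assumes half: "\<And>a B. \<forall>t\<in>{0..\<delta>/2}. \<bar>\<Sum>m<n. a m * t ^ m\<bar> \<le> B \<Longrightarrow> \<forall>m<n. \<bar>a m\<bar> \<le> K * B"
    and bound: "\<forall>t\<in>{0..\<delta>}. \<bar>\<Sum>m<Suc n. a m * t ^ m\<bar> \<le> B" and m: "m < n"
  shows "\<bar>a m\<bar> \<le> K * (1 + 2 ^ n) * B"
proof -
  define P where "P t = (\<Sum>m<Suc n. a m * t ^ m)" for t
  \<comment> \<open>the lower coefficients are those of P(2t) - 2^n P(t), a polynomial of smaller degree\<close>
  have "\<forall>t\<in>{0..\<delta>/2}. \<bar>\<Sum>m<n. a m * (2 ^ m - 2 ^ n) * t ^ m\<bar> \<le> (1 + 2 ^ n) * B"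
  proof
    fix t :: real assume t: "t \<in> {0..\<delta>/2}"
    have "\<bar>P (2 * t) - 2 ^ n * P t\<bar> \<le> \<bar>P (2 * t)\<bar> + 2 ^ n * \<bar>P t\<bar>"
      using abs_triangle_ineq4[of "P (2 * t)" "2 ^ n * P t"] by (simp add: abs_mult)
    also have "\<dots> \<le> B + 2 ^ n * B"
      using bspec[OF bound, of "2 * t"] bspec[OF bound, of t] t unfolding P_def
      by (intro add_mono mult_left_mono) auto
    finally show "\<bar>\<Sum>m<n. a m * (2 ^ m - 2 ^ n) * t ^ m\<bar> \<le> (1 + 2 ^ n) * B"
      unfolding P_def sum_power_dilate_diff by (simp add: algebra_simps)
  qed
  then have "\<forall>m<n. \<bar>a m * (2 ^ m - 2 ^ n)\<bar> \<le> K * ((1 + 2 ^ n) * B)"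
    by (rule half[of "\<lambda>m. a m * (2 ^ m - 2 ^ n)"])
  then have "\<bar>a m * (2 ^ m - 2 ^ n)\<bar> \<le> K * ((1 + 2 ^ n) * B)"
    using m by blast
  moreover have "\<bar>a m\<bar> * 1 \<le> \<bar>a m\<bar> * \<bar>(2::real) ^ m - 2 ^ n\<bar>"
    using one_le_abs_power2_diff[OF m] by (rule mult_left_mono) simp
  ultimately show ?thesis
    unfolding abs_mult by (simp add: ac_simps)
qed

lemma poly_top_coeff_le:
  fixes a :: "nat \<Rightarrow> real"
  assumes \<delta>: "0 < \<delta>" and top: "\<bar>\<Sum>m<Suc n. a m * \<delta> ^ m\<bar> \<le> B"
    and low: "\<And>m. m < n \<Longrightarrow> \<bar>a m\<bar> \<le> K * B"
  shows "\<bar>a n\<bar> \<le> (1 + (\<Sum>m<n. K * \<delta> ^ m)) / \<delta> ^ n * B"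
proof -
  have "\<bar>\<Sum>m<n. a m * \<delta> ^ m\<bar> \<le> (\<Sum>m<n. K * B * \<delta> ^ m)"
    using low \<delta> by (intro order_trans[OF sum_abs] sum_mono) (simp add: abs_mult mult_right_mono)
  moreover have "a n * \<delta> ^ n = (\<Sum>m<Suc n. a m * \<delta> ^ m) - (\<Sum>m<n. a m * \<delta> ^ m)"
    by simp
  ultimately have "\<bar>a n\<bar> * \<delta> ^ n \<le> B + B * (\<Sum>m<n. K * \<delta> ^ m)"
    using top \<delta> abs_triangle_ineq4[of "\<Sum>m<Suc n. a m * \<delta> ^ m" "\<Sum>m<n. a m * \<delta> ^ m"]
    by (simp add: abs_mult sum_distrib_left ac_simps)
  then show ?thesis
    using \<delta> by (simp add: field_simps)
qed

lemma poly_coeffs_le_step: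
  fixes a :: "nat \<Rightarrow> real"
  assumes \<delta>: "0 < \<delta>"
    and half: "\<And>a B. \<forall>t\<in>{0..\<delta>/2}. \<bar>\<Sum>m<n. a m * t ^ m\<bar> \<le> B \<Longrightarrow> \<forall>m<n. \<bar>a m\<bar> \<le> K * B"
    and bound: "\<forall>t\<in>{0..\<delta>}. \<bar>\<Sum>m<Suc n. a m * t ^ m\<bar> \<le> B"
  shows "\<forall>m<Suc n. \<bar>a m\<bar> \<le> max (K * (1 + 2 ^ n)) ((1 + (\<Sum>m<n. K * (1 + 2 ^ n) * \<delta> ^ m)) / \<delta> ^ n) * B"
proof (intro allI impI)
  fix m assume "m < Suc n"
  define K' where "K' = K * (1 + 2 ^ n)"
  have "\<bar>\<Sum>m<Suc n. a m * 0 ^ m\<bar> \<le> B"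
    using bspec[OF bound, of 0] \<delta> by simp
  then have B: "0 \<le> B"
    using abs_ge_zero[of "\<Sum>m<Suc n. a m * 0 ^ m"] by linarith
  have low: "\<bar>a j\<bar> \<le> K' * B" if "j < n" for j
    unfolding K'_def by (rule poly_lower_coeffs_le[OF half bound that])
  have top: "\<bar>a n\<bar> \<le> (1 + (\<Sum>m<n. K' * \<delta> ^ m)) / \<delta> ^ n * B"
    using bound \<delta> by (intro poly_top_coeff_le[OF \<delta> _ low]) auto
  from \<open>m < Suc n\<close> consider "m < n" | "m = n"
    by linarith
  then show "\<bar>a m\<bar> \<le> max (K * (1 + 2 ^ n)) ((1 + (\<Sum>m<n. K * (1 + 2 ^ n) * \<delta> ^ m)) / \<delta> ^ n) * B"
  proof cases
    case 1
    have "K' * B \<le> max K' ((1 + (\<Sum>m<n. K' * \<delta> ^ m)) / \<delta> ^ n) * B"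
      using B by (intro mult_right_mono) auto
    then show ?thesis
      using low[OF 1] unfolding K'_def by linarith
  next
    case 2
    have "(1 + (\<Sum>m<n. K' * \<delta> ^ m)) / \<delta> ^ n * B \<le> max K' ((1 + (\<Sum>m<n. K' * \<delta> ^ m)) / \<delta> ^ n) * B"
      using B by (intro mult_right_mono) auto
    then show ?thesis
      using top unfolding 2 K'_def by linarith
  qed
qed

lemma poly_coeffs_le:
  fixes \<delta> :: real
  assumes "0 < \<delta>"
  obtains K where "\<And>a B. \<forall>t\<in>{0..\<delta>}. \<bar>\<Sum>m<n. a m * t ^ m\<bar> \<le> B \<Longrightarrow> \<forall>m<n. \<bar>a m\<bar> \<le> K * B"
  using assms
proof (induction n arbitrary: \<delta> thesis)
  case (Suc n)
  obtain K where "\<And>a B. \<forall>t\<in>{0..\<delta>/2}. \<bar>\<Sum>m<n. a m * t ^ m\<bar> \<le> B \<Longrightarrow> \<forall>m<n. \<bar>a m\<bar> \<le> K * B"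
    using Suc.IH[of "\<delta>/2"] Suc.prems(2) by auto
  then show ?case
    using poly_coeffs_le_step[OF Suc.prems(2)] by (intro Suc.prems(1)) blast
qed simp

lemma Taylor_abs_le:
  fixes g :: "nat \<Rightarrow> real \<Rightarrow> real"
  assumes n: "0 < n"
    and g: "\<And>m s. m < n \<Longrightarrow> \<bar>s\<bar> \<le> \<bar>t\<bar> \<Longrightarrow> (g m has_real_derivative g (Suc m) s) (at s)"
  obtains \<xi> where "\<bar>\<xi>\<bar> \<le> \<bar>t\<bar>" "g 0 t = (\<Sum>m<n. g m 0 / fact m * t ^ m) + g n \<xi> / fact n * t ^ n"
proof (cases "t = 0")
  case True
  have "(\<Sum>m<n. g m 0 / fact m * t ^ m) = g 0 0"
    using True n by (simp add: lessThan_Suc_eq_insert_0[of "n - 1", simplified] zero_power)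
  then show ?thesis
    using True n by (intro that[of 0]) simp_all
next
  case False
  have "\<forall>m s. m < n \<and> min 0 t \<le> s \<and> s \<le> max 0 t \<longrightarrow> (g m has_real_derivative g (Suc m) s) (at s)"
    using g by auto
  then obtain \<xi> where "if t < 0 then t < \<xi> \<and> \<xi> < 0 else 0 < \<xi> \<and> \<xi> < t"
    and "g 0 t = (\<Sum>m<n. g m 0 / fact m * (t - 0) ^ m) + g n \<xi> / fact n * (t - 0) ^ n"
    using Taylor[of n g "g 0" "min 0 t" "max 0 t" 0 t] n False by auto
  then show ?thesis
    by (intro that[of \<xi>]) (auto split: if_splits)
qed

lemma power_div_fact_le:
  fixes t R :: real
  assumes "\<bar>t\<bar> \<le> R"
  shows "\<bar>t\<bar> ^ m / fact m \<le> R ^ m"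
proof -
  have "\<bar>t\<bar> ^ m / fact m \<le> \<bar>t\<bar> ^ m / 1"
    by (rule divide_left_mono) (auto simp: fact_ge_1)
  also have "\<dots> \<le> R ^ m"
    using assms by (simp add: power_mono)
  finally show ?thesis .
qed

lemma abs_taylor_poly_le:
  fixes c :: "nat \<Rightarrow> real"
  assumes "\<And>m. m < n \<Longrightarrow> \<bar>c m\<bar> \<le> B" "0 \<le> B" "\<bar>t\<bar> \<le> R" "n \<le> Suc k"
  shows "\<bar>\<Sum>m<n. c m / fact m * t ^ m\<bar> \<le> (\<Sum>m\<le>k. B * R ^ m)"
proof -
  have "\<bar>\<Sum>m<n. c m / fact m * t ^ m\<bar> \<le> (\<Sum>m<n. B * R ^ m)"
  proof (intro order_trans[OF sum_abs] sum_mono)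
    fix m assume "m \<in> {..<n}"
    then have "\<bar>c m\<bar> * (\<bar>t\<bar> ^ m / fact m) \<le> B * R ^ m"
      using assms power_div_fact_le[of t R m] by (intro mult_mono) auto
    then show "\<bar>c m / fact m * t ^ m\<bar> \<le> B * R ^ m"
      by (simp add: abs_mult power_abs)
  qed
  also have "\<dots> \<le> (\<Sum>m\<le>k. B * R ^ m)"
    using assms by (intro sum_mono2) auto
  finally show ?thesis .
qed

section \<open>Functions with controlled derivatives of high order\<close>

definition coords_in :: "'n set \<Rightarrow> real^'n::finite \<Rightarrow> real^'n" where
  "coords_in S x = (\<chi> j. if j \<in> S then x$j else 0)"

lemma norm_coords_in_axis_le:
  assumes "i \<notin> S" "\<bar>s\<bar> \<le> \<bar>x$i\<bar>"
  shows "norm (coords_in S x + s *\<^sub>R axis i 1) \<le> norm x"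
  using assms by (intro norm_le_componentwise_cart) (auto simp: coords_in_def axis_def)

lemma coords_in_insert: "i \<notin> S \<Longrightarrow> coords_in (insert i S) x = coords_in S x + (x$i) *\<^sub>R axis i 1"
  unfolding coords_in_def by (auto simp: vec_eq_iff axis_def)

lemma funpow_nonneg:
  fixes f :: "'a::{zero,ord} \<Rightarrow> 'a"
  assumes "0 \<le> x" "\<And>x. 0 \<le> x \<Longrightarrow> 0 \<le> f x"
  shows "0 \<le> (f ^^ n) x"
proof (induction n)
  case (Suc n)
  have "(f ^^ Suc n) x = f ((f ^^ n) x)"
    by simp
  with assms(2)[OF Suc.IH] show ?case
    by simp
qed (use assms(1) in simp)

locale controlled_derivs =
  fixes F :: "real^'n::finite \<Rightarrow> real" and k N :: nat and R M :: real
  assumes has_real_derivative_axis: "\<And>y is i. y \<in> ball 0 R \<Longrightarrow>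
      ((\<lambda>t. pderivs is F (y + t *\<^sub>R axis i 1)) has_real_derivative pderivs (i # is) F y) (at 0)"
    and high_derivs_le: "\<And>y is. y \<in> ball 0 R \<Longrightarrow> k \<le> length is \<Longrightarrow> length is \<le> N \<Longrightarrow> \<bar>pderivs is F y\<bar> \<le> M"
    and unit_ball_le: "\<And>y. y \<in> ball 0 1 \<Longrightarrow> \<bar>F y\<bar> \<le> 1"
begin

lemma has_real_derivative_axis_line:
  assumes "y + s *\<^sub>R axis i 1 \<in> ball 0 R"
  shows "((\<lambda>t. pderivs is F (y + t *\<^sub>R axis i 1)) has_real_derivative
           pderivs (i # is) F (y + s *\<^sub>R axis i 1)) (at s)"
proof -
  have "((\<lambda>u. pderivs is F (y + (u + s) *\<^sub>R axis i 1)) has_real_derivative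
          pderivs (i # is) F (y + s *\<^sub>R axis i 1)) (at 0)"
    using has_real_derivative_axis[OF assms, of "is" i] by (simp add: algebra_simps del: pderivs.simps)
  then show ?thesis
    using DERIV_shift[of "\<lambda>t. pderivs is F (y + t *\<^sub>R axis i 1)" _ 0 s] by (simp del: pderivs.simps)
qed

lemma Taylor_axis:
  assumes "0 < n" and segment: "\<And>s. \<bar>s\<bar> \<le> \<bar>t\<bar> \<Longrightarrow> y + s *\<^sub>R axis i 1 \<in> ball 0 R"
  obtains \<xi> where "\<bar>\<xi>\<bar> \<le> \<bar>t\<bar>"
    "pderivs is F (y + t *\<^sub>R axis i 1) = (\<Sum>m<n. pderivs (replicate m i @ is) F y / fact m * t ^ m)
       + pderivs (replicate n i @ is) F (y + \<xi> *\<^sub>R axis i 1) / fact n * t ^ n"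
proof -
  define g where "g m s = pderivs (replicate m i @ is) F (y + s *\<^sub>R axis i 1)" for m s
  have "(g m has_real_derivative g (Suc m) s) (at s)" if "\<bar>s\<bar> \<le> \<bar>t\<bar>" for m s
    unfolding g_def using has_real_derivative_axis_line[OF segment[OF that], of "replicate m i @ is"] by simp
  then obtain \<xi> where "\<bar>\<xi>\<bar> \<le> \<bar>t\<bar>" "g 0 t = (\<Sum>m<n. g m 0 / fact m * t ^ m) + g n \<xi> / fact n * t ^ n"
    using Taylor_abs_le[OF \<open>0 < n\<close>, of t g] by blast
  then show ?thesis
    unfolding g_def by (intro that) auto
qed

lemma Taylor_axis_remainder_le:
  assumes n: "0 < n" "k \<le> n + length is" "n + length is \<le> N"
    and segment: "\<And>s. \<bar>s\<bar> \<le> \<bar>t\<bar> \<Longrightarrow> y + s *\<^sub>R axis i 1 \<in> ball 0 R"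
  shows "\<bar>pderivs is F (y + t *\<^sub>R axis i 1) - (\<Sum>m<n. pderivs (replicate m i @ is) F y / fact m * t ^ m)\<bar>
           \<le> M * \<bar>t\<bar> ^ n / fact n"
proof -
  obtain \<xi> where \<xi>: "\<bar>\<xi>\<bar> \<le> \<bar>t\<bar>" and taylor:
    "pderivs is F (y + t *\<^sub>R axis i 1) = (\<Sum>m<n. pderivs (replicate m i @ is) F y / fact m * t ^ m)
       + pderivs (replicate n i @ is) F (y + \<xi> *\<^sub>R axis i 1) / fact n * t ^ n"
    using Taylor_axis[OF n(1) segment] by blast
  have "\<bar>pderivs (replicate n i @ is) F (y + \<xi> *\<^sub>R axis i 1)\<bar> \<le> M"
    using n by (intro high_derivs_le segment \<xi>) auto
  then have "\<bar>pderivs (replicate n i @ is) F (y + \<xi> *\<^sub>R axis i 1)\<bar> * \<bar>t\<bar> ^ n / fact n \<le> M * \<bar>t\<bar> ^ n / fact n"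
    by (intro divide_right_mono mult_right_mono) auto
  then show ?thesis
    using taylor by (simp add: abs_mult power_abs)
qed

text \<open>A derivative of order j + 1 is the linear Taylor coefficient, along an axis, of one
  of order j; each order costs a radius of \<open>1/(2k)\<close>.\<close>

lemma low_derivs_le_near_0:
  assumes k: "2 * k \<le> N" and R: "1 \<le> R" and M: "0 \<le> M"
    and K: "\<And>a B. \<forall>t\<in>{0..1 / (2 * k)}. \<bar>\<Sum>m<k. a m * t ^ m\<bar> \<le> B \<Longrightarrow> \<forall>m<k. \<bar>a m\<bar> \<le> K * B"
  shows "length is < k \<Longrightarrow> norm y < 1 - length is / (2 * k) \<Longrightarrow>
           \<bar>pderivs is F y\<bar> \<le> ((\<lambda>B. K * (B + M * (1 / (2 * k)) ^ k / fact k)) ^^ length is) 1"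
proof (induction "is" arbitrary: y)
  case Nil
  then show ?case
    using unit_ball_le[of y] by simp
next
  case (Cons i "is")
  define \<delta> :: real where "\<delta> = 1 / (2 * k)"
  define B where "B = ((\<lambda>B. K * (B + M * \<delta> ^ k / fact k)) ^^ length is) 1"
  define a where "a m = pderivs (replicate m i @ is) F y / fact m" for m
  have \<delta>: "0 < \<delta>" "real (length (i # is)) / (2 * k) = real (length is) / (2 * k) + \<delta>"
    using Cons.prems(1) unfolding \<delta>_def by (auto simp: add_divide_distrib)
  have "\<bar>\<Sum>m<k. a m * t ^ m\<bar> \<le> B + M * \<delta> ^ k / fact k" if t: "t \<in> {0..\<delta>}" for t
  proof -
    have near: "norm (y + s *\<^sub>R axis i 1) < 1 - length is / (2 * k)" if "\<bar>s\<bar> \<le> \<bar>t\<bar>" for s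
      using norm_triangle_ineq[of y "s *\<^sub>R axis i 1"] Cons.prems(2) \<delta> that t by auto
    have "1 - length is / (2 * k) \<le> R"
      using R by (smt (verit) divide_nonneg_nonneg of_nat_0_le_iff)
    then have segment: "y + s *\<^sub>R axis i 1 \<in> ball 0 R" if "\<bar>s\<bar> \<le> \<bar>t\<bar>" for s
      using near[OF that] by simp
    have "\<bar>pderivs is F (y + t *\<^sub>R axis i 1) - (\<Sum>m<k. a m * t ^ m)\<bar> \<le> M * \<bar>t\<bar> ^ k / fact k"
      unfolding a_def using Cons.prems(1) k by (intro Taylor_axis_remainder_le segment) auto
    moreover have "M * \<bar>t\<bar> ^ k / fact k \<le> M * \<delta> ^ k / fact k"
      using t M by (intro divide_right_mono mult_left_mono power_mono) auto
    moreover have "\<bar>pderivs is F (y + t *\<^sub>R axis i 1)\<bar> \<le> B"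
      unfolding B_def \<delta>_def using Cons.prems(1) near[of t] by (intro Cons.IH) auto
    ultimately show ?thesis
      by linarith
  qed
  then have "\<forall>m<k. \<bar>a m\<bar> \<le> K * (B + M * \<delta> ^ k / fact k)"
    unfolding \<delta>_def by (intro K) blast
  then have "\<bar>a 1\<bar> \<le> K * (B + M * \<delta> ^ k / fact k)"
    using Cons.prems(1) by simp
  then show ?case
    unfolding a_def B_def \<delta>_def by simp
qed

text \<open>From 0 to x one coordinate at a time, by Taylor expansion of order \<open>k - |is|\<close> along
  each axis.\<close>

lemma low_derivs_le:
  assumes "k \<le> N" and R: "1 \<le> R" and M: "0 \<le> M" and B: "0 \<le> B" and x: "norm x < R"
    and at_0: "\<And>is. length is < k \<Longrightarrow> \<bar>pderivs is F 0\<bar> \<le> B"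
  shows "finite S \<Longrightarrow> length is < k \<Longrightarrow>
           \<bar>pderivs is F (coords_in S x)\<bar> \<le> ((\<lambda>B. (B + M) * (\<Sum>m\<le>k. R ^ m)) ^^ card S) B"
proof (induction S arbitrary: "is" rule: finite_induct)
  case empty
  have "coords_in {} x = 0"
    by (simp add: coords_in_def vec_eq_iff)
  with at_0 empty show ?case
    by simp
next
  case (insert i S)
  define E where "E B = (B + M) * (\<Sum>m\<le>k. R ^ m)" for B
  define B' where "B' = (E ^^ card S) B"
  define y where "y = coords_in S x"
  define n where "n = k - length is"
  have B': "0 \<le> B'"
    unfolding B'_def E_def using B M R by (intro funpow_nonneg) (auto intro!: mult_nonneg_nonneg sum_nonneg)
  have "0 < n"
    unfolding n_def using insert.prems by simp
  have R_pow: "0 \<le> R ^ m" for m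
    using R by simp
  have segment: "y + s *\<^sub>R axis i 1 \<in> ball 0 R" if "\<bar>s\<bar> \<le> \<bar>x$i\<bar>" for s
    using norm_coords_in_axis_le[OF insert.hyps(2) that] x unfolding y_def by simp
  have remainder: "\<bar>pderivs is F (y + (x$i) *\<^sub>R axis i 1)
      - (\<Sum>m<n. pderivs (replicate m i @ is) F y / fact m * (x$i) ^ m)\<bar> \<le> M * \<bar>x$i\<bar> ^ n / fact n"
    using insert.prems \<open>k \<le> N\<close> by (intro Taylor_axis_remainder_le[OF \<open>0 < n\<close>] segment) (auto simp: n_def)
  have x_i: "\<bar>x$i\<bar> \<le> R"
    using component_le_norm_cart[of x i] x by simp
  have "\<bar>pderivs (replicate m i @ is) F y\<bar> \<le> B'" if "m < n" for m
    unfolding B'_def E_def y_def using that insert.prems by (intro insert.IH) (auto simp: n_def)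
  then have "\<bar>\<Sum>m<n. pderivs (replicate m i @ is) F y / fact m * (x$i) ^ m\<bar> \<le> (\<Sum>m\<le>k. B' * R ^ m)"
    using B' x_i by (intro abs_taylor_poly_le) (auto simp: n_def)
  moreover have "M * \<bar>x$i\<bar> ^ n / fact n \<le> M * R ^ n"
    using mult_left_mono[OF power_div_fact_le[OF x_i] M] by simp
  moreover have "M * R ^ n \<le> (\<Sum>m\<le>k. M * R ^ m)"
    using M R_pow by (intro member_le_sum[where f="\<lambda>m. M * R ^ m"]) (auto simp: n_def)
  ultimately have "\<bar>pderivs is F (y + (x$i) *\<^sub>R axis i 1)\<bar> \<le> (\<Sum>m\<le>k. B' * R ^ m) + (\<Sum>m\<le>k. M * R ^ m)"
    using remainder by linarith
  also have "\<dots> = E B'"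
    unfolding E_def by (simp add: sum_distrib_left distrib_right sum.distrib)
  finally show ?case
    using insert.hyps unfolding E_def B'_def y_def by (simp add: coords_in_insert)
qed

lemma low_derivs_le_ball:
  assumes "k \<le> N" "1 \<le> R" "0 \<le> M" "0 \<le> B"
    and "\<And>is. length is < k \<Longrightarrow> \<bar>pderivs is F 0\<bar> \<le> B"
    and "y \<in> ball 0 R" "length is < k"
  shows "\<bar>pderivs is F y\<bar> \<le> ((\<lambda>B. (B + M) * (\<Sum>m\<le>k. R ^ m)) ^^ CARD('n)) B"
proof -
  have "norm y < R"
    using assms(6) by simp
  from low_derivs_le[OF assms(1-4) this assms(5) finite_class.finite_UNIV assms(7)]
  have "\<bar>pderivs is F (coords_in UNIV y)\<bar> \<le> ((\<lambda>B. (B + M) * (\<Sum>m\<le>k. R ^ m)) ^^ CARD('n)) B"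
    by simp
  moreover have "coords_in UNIV y = y"
    by (simp add: coords_in_def vec_eq_iff)
  ultimately show ?thesis
    by simp
qed

end

lemma controlled_derivs_bounded:
  fixes k N :: nat and R M :: real
  assumes k: "0 < k" "2 * k \<le> N" and R: "1 \<le> R" and M: "0 \<le> M"
  obtains C where "\<And>(F :: real^'n::finite \<Rightarrow> real) y is. controlled_derivs F k N R M \<Longrightarrow>
                     y \<in> ball 0 R \<Longrightarrow> length is \<le> N \<Longrightarrow> \<bar>pderivs is F y\<bar> \<le> C"
proof -
  obtain K where K: "\<And>a B. \<forall>t\<in>{0..1 / (2 * k)}. \<bar>\<Sum>m<k. a m * t ^ m\<bar> \<le> B \<Longrightarrow> \<forall>m<k. \<bar>a m\<bar> \<le> K * B"
    using poly_coeffs_le[of "1 / (2 * k)" k] k by auto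
  define B_near where "B_near j = ((\<lambda>B. K * (B + M * (1 / (2 * k)) ^ k / fact k)) ^^ j) 1" for j
  define B0 where "B0 = (\<Sum>j<k. \<bar>B_near j\<bar>)"
  define E where "E B = (B + M) * (\<Sum>m\<le>k. R ^ m)" for B
  have B0: "0 \<le> B0"
    unfolding B0_def by (simp add: sum_nonneg)
  have E: "0 \<le> (E ^^ CARD('n)) B0"
    unfolding E_def using B0 M R by (intro funpow_nonneg) (auto intro!: mult_nonneg_nonneg sum_nonneg)
  show ?thesis
  proof (rule that[of "(E ^^ CARD('n)) B0 + M"])
    fix F :: "real^'n \<Rightarrow> real" and y :: "real^'n" and "is" :: "'n list"
    assume F: "controlled_derivs F k N R M" and y: "y \<in> ball 0 R" and "length is \<le> N"
    have at_0: "\<bar>pderivs js F 0\<bar> \<le> B0" if "length js < k" for js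
    proof -
      have "\<bar>pderivs js F 0\<bar> \<le> B_near (length js)"
        unfolding B_near_def using that k R M K
        by (intro controlled_derivs.low_derivs_le_near_0[OF F]) (auto simp: field_simps)
      also have "\<dots> \<le> \<bar>B_near (length js)\<bar>"
        by simp
      also have "\<dots> \<le> B0"
        unfolding B0_def using that by (intro member_le_sum) auto
      finally show ?thesis .
    qed
    show "\<bar>pderivs is F y\<bar> \<le> (E ^^ CARD('n)) B0 + M"
    proof (cases "length is < k")
      case True
      then have "\<bar>pderivs is F y\<bar> \<le> (E ^^ CARD('n)) B0"
        unfolding E_def using k R M B0 y at_0 by (intro controlled_derivs.low_derivs_le_ball[OF F]) auto
      then show ?thesis
        using M by simp
    next
      case False
      then have "\<bar>pderivs is F y\<bar> \<le> M"
        using controlled_derivs.high_derivs_le[OF F y, of "is"] \<open>length is \<le> N\<close> by simp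
      with E show ?thesis
        by linarith
    qed
  qed
qed

section \<open>The rescaled functions \<open>\<Phi>\<^sub>v\<^sup>h\<close>\<close>

lemma open_cube_subset_cube:
  assumes "s \<le> t"
  shows "open_cube s \<subseteq> (cube t :: (real^'n::finite) set)"
proof
  fix x :: "real^'n" assume "x \<in> open_cube s"
  then have "\<bar>x$i\<bar> < s" for i
    unfolding open_cube_def by simp
  then have "\<bar>x$i\<bar> \<le> t" for i
    using assms less_imp_le less_le_trans by blast
  then show "x \<in> cube t"
    unfolding cube_def by simp
qed

definition affine_derivs :: "real^'n::finite \<Rightarrow> real \<Rightarrow> real^'n^'n \<Rightarrow> real^'n \<Rightarrow> 'n list \<Rightarrow> real^'n \<Rightarrow> real" where
  "affine_derivs v e A b is y =
     (case is of [] \<Rightarrow> v \<bullet> (A *v y + b) + e | [i] \<Rightarrow> v \<bullet> (A *v axis i 1) | _ \<Rightarrow> 0)"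

lemma affine_derivs_eq_0: "2 \<le> length is \<Longrightarrow> affine_derivs v e A b is y = 0"
  unfolding affine_derivs_def by (auto split: list.split)

lemma has_real_derivative_affine_derivs:
  "((\<lambda>t. affine_derivs v e A b is (y + t *\<^sub>R axis i 1)) has_real_derivative
      affine_derivs v e A b (i # is) y) (at 0)"
proof (cases "is")
  case Nil
  have "(\<lambda>t. affine_derivs v e A b [] (y + t *\<^sub>R axis i 1))
      = (\<lambda>t. v \<bullet> (A *v y + b) + e + t * (v \<bullet> (A *v axis i 1)))"
    unfolding affine_derivs_def by (simp add: algebra_simps inner_add_right)
  moreover have "((\<lambda>t. v \<bullet> (A *v y + b) + e + t * (v \<bullet> (A *v axis i 1))) has_real_derivative
      v \<bullet> (A *v axis i 1)) (at 0)"
    by (auto intro!: derivative_eq_intros)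
  ultimately show ?thesis
    unfolding Nil by (simp add: affine_derivs_def)
next
  case (Cons j js)
  then show ?thesis
    by (cases js) (simp_all add: affine_derivs_def)
qed

definition Phi_h_derivs :: "(real^'n::finite \<Rightarrow> real) \<Rightarrow> (real^'n \<Rightarrow> real) \<Rightarrow> real^'n \<Rightarrow> real^'n \<Rightarrow> real
     \<Rightarrow> real^'n^'n \<Rightarrow> real^'n \<Rightarrow> 'n list \<Rightarrow> real^'n \<Rightarrow> real" where
  "Phi_h_derivs \<phi> \<psi> v \<omega> h A b is y =
     (dir_derivs \<psi> (map (\<lambda>i. A *v axis i 1) is) (A *v y + b + \<omega>) + affine_derivs v (- \<phi> \<omega>) A b is y) / h"

lemma has_real_derivative_Phi_h_derivs:
  assumes "real_analytic_at \<psi> (A *v y + b + \<omega>)"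
  shows "((\<lambda>t. Phi_h_derivs \<phi> \<psi> v \<omega> h A b is (y + t *\<^sub>R axis i 1)) has_real_derivative
           Phi_h_derivs \<phi> \<psi> v \<omega> h A b (i # is) y) (at 0)"
proof -
  have shift: "A *v (y + t *\<^sub>R axis i 1) + b + \<omega> = (A *v y + b + \<omega>) + t *\<^sub>R (A *v axis i 1)" for t
    by (simp add: algebra_simps)
  have "((\<lambda>t. dir_derivs \<psi> (map (\<lambda>i. A *v axis i 1) is) ((A *v y + b + \<omega>) + t *\<^sub>R (A *v axis i 1)))
      has_real_derivative dir_derivs \<psi> (A *v axis i 1 # map (\<lambda>i. A *v axis i 1) is) (A *v y + b + \<omega>)) (at 0)"
    by (rule has_real_derivative_dir_derivs[OF assms])
  then have "((\<lambda>t. dir_derivs \<psi> (map (\<lambda>i. A *v axis i 1) is) (A *v (y + t *\<^sub>R axis i 1) + b + \<omega>))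
      has_real_derivative dir_derivs \<psi> (A *v axis i 1 # map (\<lambda>i. A *v axis i 1) is) (A *v y + b + \<omega>)) (at 0)"
    by (simp only: shift)
  then show ?thesis
    unfolding Phi_h_derivs_def list.map(2) by (intro DERIV_cdivide DERIV_add has_real_derivative_affine_derivs)
qed

context
  fixes \<phi> \<psi> :: "real^'n::finite \<Rightarrow> real" and v \<omega> b :: "real^'n" and A :: "real^'n^'n" and h R :: real
  assumes coincide: "\<forall>x\<in>cube 1. \<phi> x = \<psi> x"
    and analytic: "\<forall>x\<in>cube 2. real_analytic_at \<psi> x"
    and inside: "\<forall>x\<in>ball 0 R. A *v x + b + \<omega> \<in> open_cube 1"
begin

lemma real_analytic_at_image:
  assumes "y \<in> ball 0 R"
  shows "real_analytic_at \<psi> (A *v y + b + \<omega>)"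
proof -
  have "A *v y + b + \<omega> \<in> open_cube 1"
    using inside assms by blast
  then have "A *v y + b + \<omega> \<in> cube 2"
    using open_cube_subset_cube[of 1 2] by auto
  with analytic show ?thesis
    by blast
qed

lemma pderivs_Phi_h:
  "y \<in> ball 0 R \<Longrightarrow> pderivs is (Phi_h \<phi> v \<omega> h A b) y = Phi_h_derivs \<phi> \<psi> v \<omega> h A b is y"
proof (induction "is" arbitrary: y)
  case Nil
  have "\<phi> (A *v y + b + \<omega>) = \<psi> (A *v y + b + \<omega>)"
    using coincide inside Nil open_cube_subset_cube[of 1 1] by blast
  then show ?case
    unfolding Phi_h_def Phi_def Phi_h_derivs_def affine_derivs_def by simp
next
  case (Cons i "is")
  have "\<forall>\<^sub>F t in nhds 0. pderivs is (Phi_h \<phi> v \<omega> h A b) (y + t *\<^sub>R axis i 1)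
      = Phi_h_derivs \<phi> \<psi> v \<omega> h A b is (y + t *\<^sub>R axis i 1)"
    using eventually_line_in_open[OF open_ball Cons.prems] by eventually_elim (rule Cons.IH)
  from DERIV_cong_ev[OF refl this refl]
    has_real_derivative_Phi_h_derivs[OF real_analytic_at_image[OF Cons.prems]]
  have "((\<lambda>t. pderivs is (Phi_h \<phi> v \<omega> h A b) (y + t *\<^sub>R axis i 1)) has_real_derivative
      Phi_h_derivs \<phi> \<psi> v \<omega> h A b (i # is) y) (at 0)"
    by simp
  then show ?case
    by (simp add: pderiv_coord_def DERIV_imp_deriv)
qed

lemma has_real_derivative_pderivs_Phi_h:
  assumes y: "y \<in> ball 0 R"
  shows "((\<lambda>t. pderivs is (Phi_h \<phi> v \<omega> h A b) (y + t *\<^sub>R axis i 1)) has_real_derivative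
           pderivs (i # is) (Phi_h \<phi> v \<omega> h A b) y) (at 0)"
proof -
  have "\<forall>\<^sub>F t in nhds 0. pderivs is (Phi_h \<phi> v \<omega> h A b) (y + t *\<^sub>R axis i 1)
      = Phi_h_derivs \<phi> \<psi> v \<omega> h A b is (y + t *\<^sub>R axis i 1)"
    using eventually_line_in_open[OF open_ball y] by eventually_elim (rule pderivs_Phi_h)
  from DERIV_cong_ev[OF refl this refl]
    has_real_derivative_Phi_h_derivs[OF real_analytic_at_image[OF y]] pderivs_Phi_h[OF y, of "i # is"]
  show ?thesis
    by simp
qed

end

definition sect_radius :: "nat \<Rightarrow> real \<Rightarrow> real \<Rightarrow> real" where
  "sect_radius k c h = min (root k h / c) (1/2)"

lemma sect_radius_bounds:
  assumes "0 < c" "0 < h" "0 < k"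
  shows "0 \<le> sect_radius k c h" "sect_radius k c h \<le> 1" "c ^ k * sect_radius k c h ^ k \<le> h"
proof -
  have "sect_radius k c h ^ k \<le> (root k h / c) ^ k"
    unfolding sect_radius_def using assms by (intro power_mono) (auto simp: real_root_ge_zero)
  then show "c ^ k * sect_radius k c h ^ k \<le> h"
    using assms by (simp add: power_divide field_simps)
qed (use assms in \<open>auto simp: sect_radius_def real_root_ge_zero\<close>)

lemma sect_bounds:
  fixes \<phi> :: "real^'n::finite \<Rightarrow> real"
  assumes growth: "\<forall>x\<in>ball 0 (1/2). (c * norm x) ^ k \<le> Phi \<phi> v \<omega> x"
    and c: "0 < c" and k: "0 < k" and h: "0 < h" and z: "z \<in> sect \<phi> v \<omega> h"
  shows "0 \<le> Phi \<phi> v \<omega> z" "Phi \<phi> v \<omega> z < h / 2" "norm z \<le> sect_radius k c h"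
proof -
  have z: "norm z < 1/2" "Phi \<phi> v \<omega> z < h / 2"
    using z unfolding sect_def by auto
  have grow: "(c * norm z) ^ k \<le> Phi \<phi> v \<omega> z"
    using growth z(1) by simp
  moreover have "0 \<le> (c * norm z) ^ k"
    using c by simp
  ultimately show "0 \<le> Phi \<phi> v \<omega> z"
    by linarith
  show "Phi \<phi> v \<omega> z < h / 2"
    by (fact z(2))
  have "(c * norm z) ^ k < root k h ^ k"
    using grow z(2) h k by simp
  then have "c * norm z < root k h"
    by (rule power_less_imp_less_base) (simp add: h less_imp_le real_root_ge_zero)
  then show "norm z \<le> sect_radius k c h"
    unfolding sect_radius_def using c z(1) by (simp add: field_simps)
qed

lemma normalizing_image_norm_le:
  fixes \<phi> :: "real^'n::finite \<Rightarrow> real"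
  assumes "\<forall>x\<in>ball 0 (1/2). (c * norm x) ^ k \<le> Phi \<phi> v \<omega> x" "0 < c" "0 < k" "0 < h"
    and "normalizing \<phi> v \<omega> h A b" and "norm x < 1"
  shows "norm (A *v x + b) \<le> sect_radius k c h"
  using assms by (intro sect_bounds(3)[OF assms(1-4)]) (auto simp: normalizing_def)

lemma norm_matrix_axis_le:
  fixes A :: "real^'n::finite^'n"
  assumes "\<And>x. norm x < 1 \<Longrightarrow> norm (A *v x + b) \<le> L"
  shows "norm (A *v axis i 1) \<le> 4 * L"
proof -
  define u where "u = A *v ((1/2) *\<^sub>R axis i 1) + b"
  define w where "w = A *v 0 + b"
  have "A *v axis i 1 = 2 *\<^sub>R (u - w)"
    unfolding u_def w_def by (simp add: algebra_simps)
  then have "norm (A *v axis i 1) = 2 * norm (u - w)"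
    by simp
  also have "\<dots> \<le> 2 * (norm u + norm w)"
    using norm_triangle_ineq4[of u w] by simp
  also have "\<dots> \<le> 2 * (L + L)"
    using assms[of "(1/2) *\<^sub>R axis i 1"] assms[of 0] unfolding u_def w_def by simp
  finally show ?thesis
    by simp
qed

lemma l1_norm_le: "l1_norm w \<le> real CARD('n) * norm (w :: real^'n::finite)"
proof -
  have "(\<Sum>i\<in>UNIV. \<bar>w$i\<bar>) \<le> (\<Sum>i\<in>(UNIV :: 'n set). norm w)"
    by (intro sum_mono) (metis component_le_norm_cart real_norm_def)
  then show ?thesis
    unfolding l1_norm_def by simp
qed

lemma prod_list_le_power:
  fixes f :: "'a \<Rightarrow> real"
  assumes "\<And>x. x \<in> set xs \<Longrightarrow> 0 \<le> f x \<and> f x \<le> c"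
  shows "prod_list (map f xs) \<le> c ^ length xs"
proof -
  have "0 \<le> prod_list (map f xs) \<and> prod_list (map f xs) \<le> c ^ length xs"
    using assms
  proof (induction xs)
    case (Cons x xs)
    then have "0 \<le> f x" "f x \<le> c" "0 \<le> prod_list (map f xs)" "prod_list (map f xs) \<le> c ^ length xs"
      by auto
    then show ?case
      by (simp add: mult_mono)
  qed simp
  then show ?thesis
    by simp
qed

lemma power_div_le_of_scaled_le:
  fixes L c h D :: real
  assumes "0 \<le> L" "L \<le> 1" "0 < c" "0 < h" "c ^ k * L ^ k \<le> h" "k \<le> j" "j \<le> N" "1 \<le> D"
  shows "(D * L) ^ j / h \<le> D ^ N / c ^ k"
proof -
  have "L ^ j * c ^ k \<le> L ^ k * c ^ k"
    using assms by (intro mult_right_mono power_decreasing) auto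
  also have "\<dots> \<le> h"
    using assms(5) by (simp add: mult.commute)
  finally have "L ^ j / h \<le> 1 / c ^ k"
    using assms by (simp add: field_simps)
  moreover have "D ^ j \<le> D ^ N"
    using assms by (simp add: power_increasing)
  ultimately have "D ^ j * (L ^ j / h) \<le> D ^ N * (1 / c ^ k)"
    using assms by (intro mult_mono) auto
  then show ?thesis
    by (simp add: power_mult_distrib)
qed

lemma l1_norm_column_le:
  fixes \<phi> :: "real^'n::finite \<Rightarrow> real"
  assumes "\<forall>x\<in>ball 0 (1/2). (c * norm x) ^ k \<le> Phi \<phi> v \<omega> x" "0 < c" "0 < k" "0 < h"
    and "normalizing \<phi> v \<omega> h A b"
  shows "l1_norm (A *v axis i 1) \<le> 4 * real CARD('n) * sect_radius k c h"
proof -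
  have "norm (A *v axis i 1) \<le> 4 * sect_radius k c h"
    by (intro norm_matrix_axis_le[where b=b] normalizing_image_norm_le[OF assms])
  then have "real CARD('n) * norm (A *v axis i 1) \<le> real CARD('n) * (4 * sect_radius k c h)"
    by (rule mult_left_mono) simp
  then show ?thesis
    using l1_norm_le[of "A *v axis i 1"] by linarith
qed

lemma abs_high_pderivs_Phi_h_le:
  fixes \<phi> \<psi> :: "real^'n::finite \<Rightarrow> real"
  assumes coincide: "\<forall>x\<in>cube 1. \<phi> x = \<psi> x" and analytic: "\<forall>x\<in>cube 2. real_analytic_at \<psi> x"
    and bound: "\<forall>x\<in>cube 1. \<forall>is. length is \<le> N \<longrightarrow> \<bar>pderivs is \<psi> x\<bar> \<le> M" and M: "0 \<le> M"
    and growth: "\<forall>x\<in>ball 0 (1/2). (c * norm x) ^ k \<le> Phi \<phi> v \<omega> x" and c: "0 < c" and k: "2 \<le> k"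
    and h: "0 < h" and T: "normalizing \<phi> v \<omega> h A b"
    and inside: "\<forall>x\<in>ball 0 R. A *v x + b + \<omega> \<in> open_cube 1"
    and y: "y \<in> ball 0 R" and len: "k \<le> length is" "length is \<le> N"
  shows "\<bar>pderivs is (Phi_h \<phi> v \<omega> h A b) y\<bar> \<le> M * (4 * real CARD('n)) ^ N / c ^ k"
proof -
  define q where "q = A *v y + b + \<omega>"
  define L where "L = sect_radius k c h"
  define D where "D = 4 * real CARD('n)"
  have "q \<in> open_cube 1"
    using inside y unfolding q_def by blast
  then have q: "q \<in> cube 1" "q \<in> cube 2"
    using open_cube_subset_cube[of 1 1] open_cube_subset_cube[of 1 2] by auto
  have "0 < CARD('n)"
    by (simp add: card_gt_0_iff)
  then have D: "1 \<le> D"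
    unfolding D_def by linarith
  have L: "0 \<le> L" "L \<le> 1" "c ^ k * L ^ k \<le> h"
    unfolding L_def using sect_radius_bounds[OF c h] k by auto
  have col: "0 \<le> l1_norm (A *v axis i 1) \<and> l1_norm (A *v axis i 1) \<le> D * L" for i
    using l1_norm_column_le[OF growth c _ h T] k unfolding D_def L_def l1_norm_def
    by (auto intro: sum_nonneg)
  have "affine_derivs v (- \<phi> \<omega>) A b is y = 0"
    using k \<open>k \<le> length is\<close> by (intro affine_derivs_eq_0) simp
  then have "pderivs is (Phi_h \<phi> v \<omega> h A b) y = dir_derivs \<psi> (map (\<lambda>i. A *v axis i 1) is) q / h"
    using pderivs_Phi_h[OF coincide analytic inside y] unfolding Phi_h_derivs_def q_def by simp
  then have "\<bar>pderivs is (Phi_h \<phi> v \<omega> h A b) y\<bar> = \<bar>dir_derivs \<psi> (map (\<lambda>i. A *v axis i 1) is) q\<bar> / h"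
    using h by (simp add: abs_div)
  also have "\<dots> \<le> M * prod_list (map l1_norm (map (\<lambda>i. A *v axis i 1) is)) / h"
    using analytic q bound \<open>length is \<le> N\<close> h
    by (intro divide_right_mono abs_dir_derivs_le) auto
  also have "\<dots> \<le> M * (D * L) ^ length is / h"
  proof -
    have "prod_list (map l1_norm (map (\<lambda>i. A *v axis i 1) is)) \<le> (D * L) ^ length (map (\<lambda>i. A *v axis i 1) is)"
      using col by (intro prod_list_le_power) auto
    then show ?thesis
      using M h by (intro divide_right_mono mult_left_mono) auto
  qed
  also have "\<dots> = M * ((D * L) ^ length is / h)"
    by simp
  also have "\<dots> \<le> M * (D ^ N / c ^ k)"
    using L c h M len D by (intro mult_left_mono power_div_le_of_scaled_le) auto
  finally show ?thesis
    unfolding D_def by simp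
qed

lemma Phi_h_controlled:
  fixes \<phi> \<psi> :: "real^'n::finite \<Rightarrow> real"
  assumes coincide: "\<forall>x\<in>cube 1. \<phi> x = \<psi> x" and analytic: "\<forall>x\<in>cube 2. real_analytic_at \<psi> x"
    and bound: "\<forall>x\<in>cube 1. \<forall>is. length is \<le> N \<longrightarrow> \<bar>pderivs is \<psi> x\<bar> \<le> M" and M: "0 \<le> M"
    and growth: "\<forall>x\<in>ball 0 (1/2). (c * norm x) ^ k \<le> Phi \<phi> v \<omega> x" and c: "0 < c" and k: "2 \<le> k"
    and h: "0 < h" and T: "normalizing \<phi> v \<omega> h A b"
    and inside: "\<forall>x\<in>ball 0 R. A *v x + b + \<omega> \<in> open_cube 1"
  shows "controlled_derivs (Phi_h \<phi> v \<omega> h A b) k N R (M * (4 * real CARD('n)) ^ N / c ^ k)"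
proof
  show "((\<lambda>t. pderivs is (Phi_h \<phi> v \<omega> h A b) (y + t *\<^sub>R axis i 1)) has_real_derivative
      pderivs (i # is) (Phi_h \<phi> v \<omega> h A b) y) (at 0)" if "y \<in> ball 0 R" for y "is" i
    using has_real_derivative_pderivs_Phi_h[OF coincide analytic inside that] .
  show "\<bar>pderivs is (Phi_h \<phi> v \<omega> h A b) y\<bar> \<le> M * (4 * real CARD('n)) ^ N / c ^ k"
    if "y \<in> ball 0 R" "k \<le> length is" "length is \<le> N" for y "is"
    using abs_high_pderivs_Phi_h_le[OF assms that] .
  show "\<bar>Phi_h \<phi> v \<omega> h A b y\<bar> \<le> 1" if "y \<in> ball 0 1" for y
  proof -
    have "A *v y + b \<in> sect \<phi> v \<omega> h"
      using T that unfolding normalizing_def by auto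
    then have "0 \<le> Phi \<phi> v \<omega> (A *v y + b)" "Phi \<phi> v \<omega> (A *v y + b) < h / 2"
      using sect_bounds[OF growth c _ h] k by auto
    then show ?thesis
      unfolding Phi_h_def using h by (simp add: abs_div)
  qed
qed

theorem lemma4p4:
  fixes \<phi> \<psi> :: "real^'n::finite \<Rightarrow> real"
    and k :: nat and m M c\<^sub>\<phi> h\<^sub>0 R\<^sub>0 :: real
  assumes dim: "2 \<le> CARD('n)" "CARD('n) \<le> 4"
    and coincide: "\<forall>x\<in>cube 1. \<phi> x = \<psi> x"
    and vanish: "\<forall>x. x \<notin> cube 1 \<longrightarrow> \<phi> x = 0"
    and analytic: "\<forall>x\<in>cube 2. real_analytic_at \<psi> x"
    and convex: "convex_on (cube 2) \<psi>"
    and k: "k \<ge> 2" and mM: "m > 0" "M > 0"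
    and bound: "\<forall>x\<in>cube 1. \<forall>is. length is \<le> 2*k+5 \<longrightarrow> \<bar>pderivs is \<psi> x\<bar> \<le> M"
    and nondeg: "\<forall>x\<in>cube 1. \<forall>u. norm u = 1 \<longrightarrow>
                   (\<Sum>j=2..k. \<bar>dir_deriv j u \<psi> x\<bar> / fact j) \<ge> m"
    and c\<^sub>\<phi>: "c\<^sub>\<phi> > 0"
    and growth: "\<forall>v \<omega>. admissible \<phi> v \<omega> \<longrightarrow>
                   (\<forall>x\<in>ball 0 (1/2). (c\<^sub>\<phi> * norm x) ^ k \<le> Phi \<phi> v \<omega> x)"
    and h\<^sub>0: "0 < h\<^sub>0" "h\<^sub>0 \<le> (c\<^sub>\<phi> / 4) ^ k"
    and R\<^sub>0: "R\<^sub>0 \<ge> 100 * real CARD('n)"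
    and standing: "\<forall>h v \<omega> A b. 0 < h \<and> h < h\<^sub>0 \<and> admissible \<phi> v \<omega> \<and> normalizing \<phi> v \<omega> h A b
                     \<longrightarrow> (\<forall>x\<in>ball 0 R\<^sub>0. A *v x + b + \<omega> \<in> open_cube 1)"
  shows "\<forall>is :: 'n list. length is \<le> 2*k+5 \<longrightarrow>
           (\<exists>C>1. \<forall>h v \<omega> A b x. 0 < h \<and> h < h\<^sub>0 \<and> admissible \<phi> v \<omega> \<and> normalizing \<phi> v \<omega> h A b
              \<and> x \<in> ball 0 R\<^sub>0 \<longrightarrow> \<bar>pderivs is (Phi_h \<phi> v \<omega> h A b) x\<bar> \<le> C)"
proof (intro allI impI)
  fix "is" :: "'n list" assume len: "length is \<le> 2*k+5"
  define M' where "M' = M * (4 * real CARD('n)) ^ (2*k+5) / c\<^sub>\<phi> ^ k"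
  have "1 \<le> R\<^sub>0" "0 \<le> M'"
    using R\<^sub>0 dim mM c\<^sub>\<phi> unfolding M'_def by auto
  then obtain C where C: "\<And>(F :: real^'n \<Rightarrow> real) y js. controlled_derivs F k (2*k+5) R\<^sub>0 M' \<Longrightarrow>
      y \<in> ball 0 R\<^sub>0 \<Longrightarrow> length js \<le> 2*k+5 \<Longrightarrow> \<bar>pderivs js F y\<bar> \<le> C"
    using controlled_derivs_bounded[of k "2*k+5" R\<^sub>0 M'] k by auto
  show "\<exists>C>1. \<forall>h v \<omega> A b x. 0 < h \<and> h < h\<^sub>0 \<and> admissible \<phi> v \<omega> \<and> normalizing \<phi> v \<omega> h A b
      \<and> x \<in> ball 0 R\<^sub>0 \<longrightarrow> \<bar>pderivs is (Phi_h \<phi> v \<omega> h A b) x\<bar> \<le> C"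
  proof (intro exI[of _ "max C 2"] conjI allI impI)
    fix h :: real and v \<omega> b x :: "real^'n" and A :: "real^'n^'n"
    assume H: "0 < h \<and> h < h\<^sub>0 \<and> admissible \<phi> v \<omega> \<and> normalizing \<phi> v \<omega> h A b \<and> x \<in> ball 0 R\<^sub>0"
    then have "controlled_derivs (Phi_h \<phi> v \<omega> h A b) k (2*k+5) R\<^sub>0 M'"
      unfolding M'_def using growth standing mM c\<^sub>\<phi> k
      by (intro Phi_h_controlled[OF coincide analytic bound]) auto
    then have "\<bar>pderivs is (Phi_h \<phi> v \<omega> h A b) x\<bar> \<le> C"
      using C H len by blast
    then show "\<bar>pderivs is (Phi_h \<phi> v \<omega> h A b) x\<bar> \<le> max C 2"
      by simp
  qed simp
qed

end
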